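(* Let $\sigma,\tau,\bar\sigma,\bar\tau$ satisfy the Standing Hypothesis and let $M\ge1$, $a\ge2$, $k\ge1$ be integers. Then $$\begin{aligned} &\{\sigma,ka,ka,a^{M},\tau\,|\,\bar\sigma,(k-1)a+1,1^{M},\bar\tau\}-\{\sigma,ka+1,ka-1,a^{M},\tau\,|\,\bar\sigma,(k-1)a+1,1^{M},\bar\tau\}\\ &\quad+\sum_{i=1}^{M}\Big(\{\sigma,a+1,a^{i-1},ka-1,ka,a^{M-i},\tau\,|\,\bar\sigma,1^{i},(k-1)a+1,1^{M-i},\bar\tau\}\\ &\qquad\qquad-\{\sigma,a+1,a^{i-1},ka,ka-1,a^{M-i},\tau\,|\,\bar\sigma,1^{i},(k-1)a+1,1^{M-i},\bar\tau\}\Big)\\ &=\{\sigma,ka,ka,a^{M},\tau\,|\,\bar\sigma,ka,1^{M},\bar\tau\} +\{\sigma,ka+1,(k+1)a-1,a^{M-1},\tau\,|\,\bar\sigma,ka,1^{M-1},\bar\tau\}\\ &\quad-\{\sigma,(k+1)a,ka,a^{M-1},\tau\,|\,\bar\sigma,ka,1^{M-1},\bar\tau\} +\{\sigma,a+1,a^{M-1},ka,ka-1+\tau_1,\tau\backslash\tau_1\,|\,\bar\sigma,1^{M},ka,\bar\tau\backslash\bar\tau_1\}\\ &\quad+\sum_{i=1}^{M-1}\Big(\{\sigma,a+1,a^{i-1},ka,(k+1)a-1,a^{M-1-i},\tau\,|\,\bar\sigma,1^{i},ka,1^{M-i-1},\bar\tau\}\\ &\qquad\qquad-\{\sigma,a+1,a^{i-1},(k+1)a-1,ka,a^{M-1-i},\tau\,|\,\bar\sigma,1^{i},ka,1^{M-i-1},\bar\tau\}\Big),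 \end{aligned}$$ where the fourth term on the right (the one containing $\tau\backslash\tau_1$) is omitted if $t=0$.
   Context: Overlap notation: for $\alpha=(\alpha_1,\dots,\alpha_L)$ with $\alpha_i\ge1$ and $\beta=(\beta_1,\dots,\beta_{L-1})$ with $0\le\beta_i\le\min\{\alpha_i,\alpha_{i+1}\}$, $(\alpha\,|\,\beta)$ is the skew diagram $\lambda/\mu$ (boxes $(i,j)$ with $\mu_i<j\le\lambda_i$, identified up to deleting empty rows/columns) with $L$ nonempty rows, $\lambda_i-\mu_i=\alpha_i$, $\lambda_{i+1}-\mu_i=\beta_i$ (row $i$ has $\alpha_i$ boxes, rows $i,i+1$ share $\beta_i$ columns); $\{\alpha\,|\,\beta\}=s_{\lambda/\mu}$ is its skew Schur function (generating function of semistandard Young tableaux of that shape). Commas denote concatenation of sequences; $a^j$ denotes $j$ copies of $a$ (empty if $j=0$). Standing Hypothesis: $\sigma=(\sigma_1,\dots,\sigma_s)$, $\tau=(\tau_1,\dots,\tau_t)$ compositions, $s,t\ge0$; $\bar\sigma,\bar\tau$ sequences of non-negative integers of lengths $s,t$; $\bar\sigma_s=1$ if $s>0$; $\bar\tau_1=1$ if $t>0$; $\bar\sigma_i\le\min\{\sigma_i,\sigma_{i+1}\}$ ($1\le i<s$), $\bar\tau_i\le\min\{\tau_i,\tau_{i-1}\}$ ($1<i\le t$). $\tau\backslash\tau_1$ removes the first part of $\tau$ and $\bar\tau\backslash\bar\tau_1$ the first entry of $\bar\tau$. *)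

theory Defs
  imports "HOL-Library.FuncSet"
begin

text \<open>Rows are indexed 0..L-1 (top to bottom, English
convention), columns are integers.  Row i occupies the columns mu_i <= j < lambda_i, where
lambda_i - mu_i = alpha_i and lambda_(i+1) - mu_i = beta_i; the last row is normalised by
mu_(L-1) = 0.\<close>

definition ov_mu :: "nat list \<Rightarrow> nat list \<Rightarrow> nat \<Rightarrow> int" where
  "ov_mu \<alpha> \<beta> i = (\<Sum>j\<in>{Suc i..<length \<alpha>}. int (\<alpha> ! j)) - (\<Sum>j\<in>{i..<length \<alpha> - 1}. int (\<beta> ! j))"

definition ov_lam :: "nat list \<Rightarrow> nat list \<Rightarrow> nat \<Rightarrow> int" where
  "ov_lam \<alpha> \<beta> i = ov_mu \<alpha> \<beta> i + int (\<alpha> ! i)"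

definition ov_cells :: "nat list \<Rightarrow> nat list \<Rightarrow> (nat \<times> int) set" where
  "ov_cells \<alpha> \<beta> = {(i, j). i < length \<alpha> \<and> ov_mu \<alpha> \<beta> i \<le> j \<and> j < ov_lam \<alpha> \<beta> i}"

definition ssyt :: "nat \<Rightarrow> (nat \<times> int) set \<Rightarrow> ((nat \<times> int) \<Rightarrow> nat) set" where
  "ssyt n D = {T \<in> D \<rightarrow>\<^sub>E {..<n}.
      (\<forall>i j j'. (i, j) \<in> D \<longrightarrow> (i, j') \<in> D \<longrightarrow> j \<le> j' \<longrightarrow> T (i, j) \<le> T (i, j')) \<and>
      (\<forall>i i' j. (i, j) \<in> D \<longrightarrow> (i', j) \<in> D \<longrightarrow> i < i' \<longrightarrow> T (i, j) < T (i', j))}"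

text \<open>{alpha | beta} = s_(lambda/mu) evaluated in the n variables x 0, ..., x (n-1)
(all further variables set to 0).\<close>

definition ov_schur :: "nat \<Rightarrow> (nat \<Rightarrow> 'a::comm_ring_1) \<Rightarrow> nat list \<Rightarrow> nat list \<Rightarrow> 'a" where
  "ov_schur n x \<alpha> \<beta> = (\<Sum>T\<in>ssyt n (ov_cells \<alpha> \<beta>). \<Prod>c\<in>ov_cells \<alpha> \<beta>. x (T c))"

definition standing_hyp :: "nat list \<Rightarrow> nat list \<Rightarrow> nat list \<Rightarrow> nat list \<Rightarrow> bool" where
  "standing_hyp \<sigma> \<tau> \<sigma>b \<tau>b \<longleftrightarrow>
     (\<forall>i<length \<sigma>. 1 \<le> \<sigma> ! i) \<and> (\<forall>i<length \<tau>. 1 \<le> \<tau> ! i) \<and>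
     length \<sigma>b = length \<sigma> \<and> length \<tau>b = length \<tau> \<and>
     (\<sigma> \<noteq> [] \<longrightarrow> last \<sigma>b = 1) \<and> (\<tau> \<noteq> [] \<longrightarrow> hd \<tau>b = 1) \<and>
     (\<forall>i. i + 1 < length \<sigma> \<longrightarrow> \<sigma>b ! i \<le> min (\<sigma> ! i) (\<sigma> ! (i + 1))) \<and>
     (\<forall>i. 1 \<le> i \<and> i < length \<tau> \<longrightarrow> \<tau>b ! i \<le> min (\<tau> ! i) (\<tau> ! (i - 1)))"

end

theory Submission
  imports Defs "HOL-Library.Multiset"
begin

(* A semistandard tableau of shape (alpha | beta) is the same thing as a list of weakly
   increasing row words w_0, ..., w_(L-1) in which consecutive rows share beta_i columns:
   the first beta_i letters of w_i lie strictly below the last beta_i letters of w_(i+1).  Switching the tails of two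
   adjacent rows (a Lindstroem-Gessel-Viennot type involution) yields the three-term
   relation  {..,p,q,..|..,0,..} = {..,p,q,..|..,r,..} + h_(r-1) {..,p+q-r+1,..|..},
   and overlap 0 factorises.  These two facts give, by algebra alone, the case M = 1 of the
   identity, and an induction on M that moves one row of length a into tau gives the general
   case, with k*a written as a + c.  Finally all shapes occurring in the statement are valid
   under the Standing Hypothesis, so row_schur can be replaced by ov_schur. *)

(* Row u lies above row v and they share b columns: the first b letters of u are strictly
   smaller than the last b letters of v (column strictness on the shared columns). *)
definition overlap_ok :: "nat \<Rightarrow> nat list \<Rightarrow> nat list \<Rightarrow> bool" where
  "overlap_ok b u v \<longleftrightarrow> (\<forall>j<b. u!j < v!(length v - b + j))"

fun overlaps_ok :: "nat list \<Rightarrow> nat list list \<Rightarrow> bool" where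
  "overlaps_ok (b#bs) (u#v#ws) = (overlap_ok b u v \<and> overlaps_ok bs (v#ws))"
| "overlaps_ok _ _ = True"

definition row_word :: "nat \<Rightarrow> nat list \<Rightarrow> bool" where
  "row_word n w \<longleftrightarrow> sorted w \<and> set w \<subseteq> {..<n}"

definition row_tabs :: "nat \<Rightarrow> nat list \<Rightarrow> nat list \<Rightarrow> nat list list set" where
  "row_tabs n \<alpha> \<beta> = {ws. map length ws = \<alpha> \<and> (\<forall>w\<in>set ws. row_word n w) \<and> overlaps_ok \<beta> ws}"

definition tab_weight :: "(nat \<Rightarrow> 'a::comm_ring_1) \<Rightarrow> nat list list \<Rightarrow> 'a" where
  "tab_weight x ws = prod_list (map x (concat ws))"

definition row_schur :: "nat \<Rightarrow> (nat \<Rightarrow> 'a::comm_ring_1) \<Rightarrow> nat list \<Rightarrow> nat list \<Rightarrow> 'a" where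
  "row_schur n x \<alpha> \<beta> = (\<Sum>ws\<in>row_tabs n \<alpha> \<beta>. tab_weight x ws)"

lemma finite_row_tabs: "finite (row_tabs n \<alpha> \<beta>)"
proof -
  let ?m = "Max (insert 0 (set \<alpha>))"
  let ?W = "{w. set w \<subseteq> {..<n} \<and> length w \<le> ?m}"
  have fin_W: "finite ?W" using finite_lists_length_le[of "{..<n}" ?m] by simp
  have "row_tabs n \<alpha> \<beta> \<subseteq> {ws. set ws \<subseteq> ?W \<and> length ws = length \<alpha>}"
  proof
    fix ws assume "ws \<in> row_tabs n \<alpha> \<beta>"
    hence len: "map length ws = \<alpha>" and rows: "\<forall>w\<in>set ws. row_word n w"
      by (auto simp: row_tabs_def)
    have "length w \<le> ?m" if "w \<in> set ws" for w
      using that len by (metis Max_ge List.finite_set finite_insert image_eqI insertCI set_map)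
    thus "ws \<in> {ws. set ws \<subseteq> ?W \<and> length ws = length \<alpha>}"
      using rows len by (auto simp: row_word_def dest: arg_cong[of _ _ length])
  qed
  moreover have "finite {ws. set ws \<subseteq> ?W \<and> length ws = length \<alpha>}"
    using finite_lists_length_eq[OF fin_W] by simp
  ultimately show ?thesis by (rule finite_subset)
qed

lemma overlaps_ok_append:
  "length bs1 + 1 = length ws1 \<Longrightarrow>
   overlaps_ok (bs1 @ bs2) (ws1 @ ws2) = (overlaps_ok bs1 ws1 \<and> overlaps_ok bs2 (last ws1 # ws2))"
proof (induction ws1 arbitrary: bs1)
  case (Cons w ws1)
  show ?case
  proof (cases ws1)
    case (Cons w' ws1')
    then obtain c bs1' where "bs1 = c # bs1'" using Cons.prems by (cases bs1) auto
    then show ?thesis using Cons.IH[of bs1'] Cons.prems \<open>ws1 = w' # ws1'\<close> by simp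
  qed (use Cons.prems in simp)
qed simp

lemma overlaps_ok_append_overlap:
  assumes "length bs1 + 1 = length ws1" "ws2 \<noteq> []"
  shows "overlaps_ok (bs1 @ b # bs2) (ws1 @ ws2)
     = (overlaps_ok bs1 ws1 \<and> overlap_ok b (last ws1) (hd ws2) \<and> overlaps_ok bs2 ws2)"
  using overlaps_ok_append[OF assms(1), of "b # bs2" ws2] assms(2) by (cases ws2) auto

lemma overlaps_ok_nth:
  "length bs + 1 = length ws \<Longrightarrow>
   overlaps_ok bs ws \<longleftrightarrow> (\<forall>i<length bs. overlap_ok (bs!i) (ws!i) (ws!(Suc i)))"
proof (induction ws arbitrary: bs)
  case (Cons w ws)
  show ?case
  proof (cases bs)
    case (Cons b bs')
    then obtain v ws' where "ws = v # ws'" using Cons.prems by (cases ws) auto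
    then show ?thesis using Cons.IH[of bs'] Cons.prems \<open>bs = b # bs'\<close>
      by (auto simp: less_Suc_eq_0_disj)
  qed (cases ws; simp)
qed simp

lemma tab_weight_append: "tab_weight x (ws1 @ ws2) = tab_weight x ws1 * tab_weight x ws2"
  by (simp add: tab_weight_def)

lemma prod_list_mset_eq:
  "mset l1 = mset l2 \<Longrightarrow> prod_list (map x l1) = prod_list (map (x::nat \<Rightarrow> 'a::comm_ring_1) l2)"
  by (metis mset_map prod_mset_prod_list)

(* Valid overlap data: one overlap between each pair of consecutive rows, bounded by both
   row lengths.  For such data (alpha | beta) is a genuine skew diagram. *)
definition overlap_valid :: "nat list \<Rightarrow> nat list \<Rightarrow> bool" where
  "overlap_valid \<alpha> \<beta> \<longleftrightarrow>
     length \<beta> + 1 = length \<alpha> \<and> (\<forall>i<length \<beta>. \<beta>!i \<le> \<alpha>!i \<and> \<beta>!i \<le> \<alpha>!(Suc i))"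

lemma overlap_valid_Nil [simp]: "\<not> overlap_valid [] \<beta>"
  by (simp add: overlap_valid_def)

lemma overlap_valid_single [simp]: "overlap_valid [p] \<beta> \<longleftrightarrow> \<beta> = []"
  by (auto simp: overlap_valid_def)

lemma overlap_valid_Cons_Nil [simp]: "\<not> overlap_valid (p # q # ps) []"
  by (simp add: overlap_valid_def)

lemma overlap_valid_Cons_Cons [simp]:
  "overlap_valid (p # q # ps) (b # bs) \<longleftrightarrow> b \<le> p \<and> b \<le> q \<and> overlap_valid (q # ps) bs"
  by (auto simp: overlap_valid_def less_Suc_eq_0_disj)

lemma prod_list_concat_map:
  "prod_list (map x (concat xss)) = prod_list (map (\<lambda>xs. prod_list (map x xs)) xss)"
  by (induct xss) auto

(* For valid data, reading the cells of (alpha | beta) row by row is a weight preserving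
   bijection between semistandard tableaux and row tableaux. *)
context
  fixes \<alpha> \<beta> :: "nat list"
  assumes valid: "overlap_valid \<alpha> \<beta>"
begin

lemma length_overlaps: "length \<beta> = length \<alpha> - 1" "length \<alpha> \<ge> 1"
  using valid unfolding overlap_valid_def by auto

lemma overlap_bounds: "i < length \<beta> \<Longrightarrow> \<beta>!i \<le> \<alpha>!i \<and> \<beta>!i \<le> \<alpha>!(Suc i)"
  using valid unfolding overlap_valid_def by auto

lemma mu_step: "Suc i < length \<alpha> \<Longrightarrow> ov_mu \<alpha> \<beta> i = ov_mu \<alpha> \<beta> (Suc i) + int (\<alpha>!(Suc i)) - int (\<beta>!i)"
proof -
  assume i: "Suc i < length \<alpha>"
  have "(\<Sum>j\<in>{Suc i..<length \<alpha>}. int (\<alpha>!j)) = int (\<alpha>!(Suc i)) + (\<Sum>j\<in>{Suc (Suc i)..<length \<alpha>}. int (\<alpha>!j))"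
    "(\<Sum>j\<in>{i..<length \<alpha>-1}. int (\<beta>!j)) = int (\<beta>!i) + (\<Sum>j\<in>{Suc i..<length \<alpha>-1}. int (\<beta>!j))"
    using i by (simp_all add: sum.atLeast_Suc_lessThan)
  then show ?thesis unfolding ov_mu_def by simp
qed

lemma mu_mono: "i \<le> i' \<Longrightarrow> i' < length \<alpha> \<Longrightarrow> ov_mu \<alpha> \<beta> i' \<le> ov_mu \<alpha> \<beta> i"
proof (induction i' rule: dec_induct)
  case (step k) then show ?case using mu_step[of k] overlap_bounds[of k] length_overlaps by force
qed simp

lemma lam_mono: "i \<le> i' \<Longrightarrow> i' < length \<alpha> \<Longrightarrow> ov_mu \<alpha> \<beta> i' + int (\<alpha>!i') \<le> ov_mu \<alpha> \<beta> i + int (\<alpha>!i)"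
proof (induction i' rule: dec_induct)
  case (step k) then show ?case using mu_step[of k] overlap_bounds[of k] length_overlaps by force
qed simp

lemma in_cells: "(i, c) \<in> ov_cells \<alpha> \<beta> \<longleftrightarrow> i < length \<alpha> \<and> ov_mu \<alpha> \<beta> i \<le> c \<and> c < ov_mu \<alpha> \<beta> i + int (\<alpha>!i)"
  unfolding ov_cells_def ov_lam_def by auto

lemma cells_column_convex:
  "i < k \<Longrightarrow> k < i' \<Longrightarrow> (i, c) \<in> ov_cells \<alpha> \<beta> \<Longrightarrow> (i', c) \<in> ov_cells \<alpha> \<beta> \<Longrightarrow>
   (k, c) \<in> ov_cells \<alpha> \<beta>"
  using mu_mono[of i k] lam_mono[of k i'] unfolding in_cells by force

lemma shared_cell_positions:
  "Suc i < length \<alpha> \<Longrightarrow> (i, c) \<in> ov_cells \<alpha> \<beta> \<Longrightarrow> (Suc i, c) \<in> ov_cells \<alpha> \<beta> \<Longrightarrow>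
   nat (c - ov_mu \<alpha> \<beta> i) < \<beta>!i \<and> nat (c - ov_mu \<alpha> \<beta> (Suc i)) = \<alpha>!(Suc i) - \<beta>!i + nat (c - ov_mu \<alpha> \<beta> i)"
  using mu_step[of i] overlap_bounds[of i] length_overlaps unfolding in_cells by auto

definition tab_rows :: "(nat \<times> int \<Rightarrow> nat) \<Rightarrow> nat list list" where
  "tab_rows T = map (\<lambda>i. map (\<lambda>j. T (i, ov_mu \<alpha> \<beta> i + int j)) [0..<\<alpha>!i]) [0..<length \<alpha>]"

definition rows_tab :: "nat list list \<Rightarrow> nat \<times> int \<Rightarrow> nat" where
  "rows_tab ws = (\<lambda>(i, c). if (i, c) \<in> ov_cells \<alpha> \<beta> then ws!i!nat (c - ov_mu \<alpha> \<beta> i) else undefined)"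

lemma row_tabsD:
  assumes "ws \<in> row_tabs n \<alpha> \<beta>"
  shows "length ws = length \<alpha>" "\<And>i. i < length \<alpha> \<Longrightarrow> length (ws!i) = \<alpha>!i" "\<And>i. i < length \<alpha> \<Longrightarrow> row_word n (ws!i)"
    "\<And>i. i < length \<beta> \<Longrightarrow> overlap_ok (\<beta>!i) (ws!i) (ws!(Suc i))"
proof -
  have len: "map length ws = \<alpha>" and rows: "\<forall>w\<in>set ws. row_word n w" and ovl: "overlaps_ok \<beta> ws"
    using assms unfolding row_tabs_def by auto
  show l: "length ws = length \<alpha>" using len by (metis length_map)
  show "\<And>i. i < length \<alpha> \<Longrightarrow> length (ws!i) = \<alpha>!i" using len l by (metis nth_map)
  show "\<And>i. i < length \<alpha> \<Longrightarrow> row_word n (ws!i)" using rows l by simp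
  have "length \<beta> + 1 = length ws" using l length_overlaps by simp
  then show "\<And>i. i < length \<beta> \<Longrightarrow> overlap_ok (\<beta>!i) (ws!i) (ws!(Suc i))"
    using ovl overlaps_ok_nth by blast
qed

lemma tab_rows_row_tabs:
  assumes T: "T \<in> ssyt n (ov_cells \<alpha> \<beta>)"
  shows "tab_rows T \<in> row_tabs n \<alpha> \<beta>"
proof -
  have T_fun: "T \<in> ov_cells \<alpha> \<beta> \<rightarrow>\<^sub>E {..<n}" and
    row_mono: "\<And>i j j'. (i, j) \<in> ov_cells \<alpha> \<beta> \<Longrightarrow> (i, j') \<in> ov_cells \<alpha> \<beta> \<Longrightarrow> j \<le> j' \<Longrightarrow>
       T (i, j) \<le> T (i, j')" and
    col_strict: "\<And>i i' j. (i, j) \<in> ov_cells \<alpha> \<beta> \<Longrightarrow> (i', j) \<in> ov_cells \<alpha> \<beta> \<Longrightarrow> i < i' \<Longrightarrow>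
       T (i, j) < T (i', j)"
    using T unfolding ssyt_def by auto
  have rows: "\<forall>w\<in>set (tab_rows T). row_word n w"
  proof
    fix w assume "w \<in> set (tab_rows T)"
    then obtain i where i: "i < length \<alpha>" "w = map (\<lambda>j. T (i, ov_mu \<alpha> \<beta> i + int j)) [0..<\<alpha>!i]"
      unfolding tab_rows_def by auto
    have cell: "j < \<alpha>!i \<Longrightarrow> (i, ov_mu \<alpha> \<beta> i + int j) \<in> ov_cells \<alpha> \<beta>" for j using i unfolding in_cells by simp
    have "sorted w" unfolding i(2) sorted_iff_nth_mono by (auto intro!: row_mono cell)
    moreover have "set w \<subseteq> {..<n}" unfolding i(2) using T_fun cell by (auto simp: PiE_def Pi_def)
    ultimately show "row_word n w" unfolding row_word_def by simp
  qed
  have "overlap_ok (\<beta>!i) (tab_rows T ! i) (tab_rows T ! Suc i)" if i: "i < length \<beta>" for i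
    unfolding overlap_ok_def
  proof (intro allI impI)
    fix j assume j: "j < \<beta>!i"
    have si: "Suc i < length \<alpha>" using i length_overlaps by simp
    define k where "k = \<alpha>!(Suc i) - \<beta>!i + j"
    have k: "k < \<alpha>!(Suc i)" "ov_mu \<alpha> \<beta> (Suc i) + int k = ov_mu \<alpha> \<beta> i + int j"
      using j overlap_bounds[OF i] mu_step[OF si] unfolding k_def by (auto simp: of_nat_diff)
    have cells: "(i, ov_mu \<alpha> \<beta> i + int j) \<in> ov_cells \<alpha> \<beta>" "(Suc i, ov_mu \<alpha> \<beta> i + int j) \<in> ov_cells \<alpha> \<beta>"
      using si j overlap_bounds[OF i] mu_step[OF si] unfolding in_cells by simp_all
    have "tab_rows T ! i ! j = T (i, ov_mu \<alpha> \<beta> i + int j)"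
      using si j overlap_bounds[OF i] unfolding tab_rows_def by simp
    also have "\<dots> < T (Suc i, ov_mu \<alpha> \<beta> i + int j)" using col_strict[OF cells] by simp
    also have "\<dots> = T (Suc i, ov_mu \<alpha> \<beta> (Suc i) + int k)" using k(2) by simp
    also have "\<dots> = tab_rows T ! Suc i ! (length (tab_rows T ! Suc i) - \<beta>!i + j)"
      using si k(1) unfolding tab_rows_def k_def by simp
    finally show "tab_rows T ! i ! j < tab_rows T ! Suc i ! (length (tab_rows T ! Suc i) - \<beta>!i + j)" .
  qed
  moreover have "length \<beta> + 1 = length (tab_rows T)" using length_overlaps unfolding tab_rows_def by simp
  moreover have "map length (tab_rows T) = \<alpha>" unfolding tab_rows_def by (simp add: comp_def map_nth)
  ultimately show ?thesis unfolding row_tabs_def using rows overlaps_ok_nth by simp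
qed

lemma row_tabs_column_step:
  assumes ws: "ws \<in> row_tabs n \<alpha> \<beta>" and si: "Suc i < length \<alpha>"
    and cells: "(i, c) \<in> ov_cells \<alpha> \<beta>" "(Suc i, c) \<in> ov_cells \<alpha> \<beta>"
  shows "ws!i!nat (c - ov_mu \<alpha> \<beta> i) < ws!(Suc i)!nat (c - ov_mu \<alpha> \<beta> (Suc i))"
proof -
  have i: "i < length \<beta>" using si length_overlaps by simp
  note pos = shared_cell_positions[OF si cells]
  have "ws!i!nat (c - ov_mu \<alpha> \<beta> i) < ws!(Suc i)!(length (ws!(Suc i)) - \<beta>!i + nat (c - ov_mu \<alpha> \<beta> i))"
    using row_tabsD(4)[OF ws i] pos unfolding overlap_ok_def by blast
  thus ?thesis using pos row_tabsD(2)[OF ws si] by simp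
qed

lemma row_tabs_column_strict:
  assumes ws: "ws \<in> row_tabs n \<alpha> \<beta>"
  shows "(i, c) \<in> ov_cells \<alpha> \<beta> \<Longrightarrow> (i + Suc d, c) \<in> ov_cells \<alpha> \<beta> \<Longrightarrow>
     ws!i!nat (c - ov_mu \<alpha> \<beta> i) < ws!(i + Suc d)!nat (c - ov_mu \<alpha> \<beta> (i + Suc d))"
proof (induction d)
  case 0
  then show ?case using row_tabs_column_step[OF ws _ 0(1)] unfolding in_cells by simp
next
  case (Suc d)
  have mid: "(i + Suc d, c) \<in> ov_cells \<alpha> \<beta>"
    by (rule cells_column_convex[OF _ _ Suc.prems]) auto
  have "Suc (i + Suc d) < length \<alpha>" using Suc.prems(2) unfolding in_cells by simp
  then show ?case using row_tabs_column_step[OF ws _ mid] Suc.prems(2) Suc.IH[OF Suc.prems(1) mid] by simp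
qed

lemma rows_tab_ssyt:
  assumes ws: "ws \<in> row_tabs n \<alpha> \<beta>"
  shows "rows_tab ws \<in> ssyt n (ov_cells \<alpha> \<beta>)"
proof -
  have val: "(i, c) \<in> ov_cells \<alpha> \<beta> \<Longrightarrow> rows_tab ws (i, c) = ws!i!nat (c - ov_mu \<alpha> \<beta> i)" for i c
    unfolding rows_tab_def by simp
  have idx: "(i, c) \<in> ov_cells \<alpha> \<beta> \<Longrightarrow> i < length \<alpha> \<and> nat (c - ov_mu \<alpha> \<beta> i) < length (ws!i)" for i c
    using row_tabsD(2)[OF ws] unfolding in_cells by auto
  have "rows_tab ws \<in> ov_cells \<alpha> \<beta> \<rightarrow>\<^sub>E {..<n}"
  proof
    fix p assume p: "p \<in> ov_cells \<alpha> \<beta>"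
    obtain i c where pc: "p = (i, c)" by (cases p)
    have "ws!i!nat (c - ov_mu \<alpha> \<beta> i) \<in> set (ws!i)" "set (ws!i) \<subseteq> {..<n}"
      using idx[OF p[unfolded pc]] row_tabsD(3)[OF ws] unfolding row_word_def by auto
    then show "rows_tab ws p \<in> {..<n}" using val p pc by auto
  qed (auto simp: rows_tab_def)
  moreover have "rows_tab ws (i, j) \<le> rows_tab ws (i, j')"
    if c: "(i, j) \<in> ov_cells \<alpha> \<beta>" "(i, j') \<in> ov_cells \<alpha> \<beta>" and "j \<le> j'" for i j j'
  proof -
    have "sorted (ws!i)" using row_tabsD(3)[OF ws] idx[OF c(1)] unfolding row_word_def by simp
    moreover have "nat (j - ov_mu \<alpha> \<beta> i) \<le> nat (j' - ov_mu \<alpha> \<beta> i)" using \<open>j \<le> j'\<close> by simp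
    ultimately show ?thesis using val[OF c(1)] val[OF c(2)] idx[OF c(2)] by (simp add: sorted_nth_mono)
  qed
  moreover have "rows_tab ws (i, j) < rows_tab ws (i', j)"
    if c: "(i, j) \<in> ov_cells \<alpha> \<beta>" "(i', j) \<in> ov_cells \<alpha> \<beta>" and "i < i'" for i i' j
  proof -
    obtain d where "i' = i + Suc d" using \<open>i < i'\<close> less_iff_Suc_add by auto
    then show ?thesis using row_tabs_column_strict[OF ws c(1), of d] c(2) val[OF c(1)] val[OF c(2)] by simp
  qed
  ultimately show ?thesis unfolding ssyt_def by blast
qed

lemma rows_tab_tab_rows:
  assumes T: "T \<in> ssyt n (ov_cells \<alpha> \<beta>)"
  shows "rows_tab (tab_rows T) = T"
proof
  fix p :: "nat \<times> int"
  obtain i c where pc: "p = (i, c)" by (cases p)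
  show "rows_tab (tab_rows T) p = T p"
  proof (cases "p \<in> ov_cells \<alpha> \<beta>")
    case True
    hence "i < length \<alpha>" "ov_mu \<alpha> \<beta> i \<le> c" "nat (c - ov_mu \<alpha> \<beta> i) < \<alpha>!i" using pc in_cells by auto
    then show ?thesis using True pc unfolding rows_tab_def tab_rows_def by simp
  next
    case False
    have "T \<in> ov_cells \<alpha> \<beta> \<rightarrow>\<^sub>E {..<n}" using T unfolding ssyt_def by auto
    then show ?thesis using False unfolding rows_tab_def pc by (auto simp: PiE_def extensional_def)
  qed
qed

lemma tab_rows_rows_tab:
  assumes ws: "ws \<in> row_tabs n \<alpha> \<beta>"
  shows "tab_rows (rows_tab ws) = ws"
proof (rule nth_equalityI)
  show "length (tab_rows (rows_tab ws)) = length ws" using row_tabsD(1)[OF ws] unfolding tab_rows_def by simp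
  fix i assume "i < length (tab_rows (rows_tab ws))"
  hence i: "i < length \<alpha>" unfolding tab_rows_def by simp
  show "tab_rows (rows_tab ws) ! i = ws ! i"
  proof (rule nth_equalityI)
    show "length (tab_rows (rows_tab ws) ! i) = length (ws ! i)"
      using i row_tabsD(2)[OF ws i] unfolding tab_rows_def by simp
    fix j assume "j < length (tab_rows (rows_tab ws) ! i)"
    hence j: "j < \<alpha>!i" using i unfolding tab_rows_def by simp
    have "(i, ov_mu \<alpha> \<beta> i + int j) \<in> ov_cells \<alpha> \<beta>" using i j unfolding in_cells by simp
    thus "tab_rows (rows_tab ws) ! i ! j = ws ! i ! j" using i j unfolding tab_rows_def rows_tab_def by simp
  qed
qed

lemma tab_weight_tab_rows: "tab_weight x (tab_rows T) = (\<Prod>c\<in>ov_cells \<alpha> \<beta>. x (T c))"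
proof -
  define S where "S = (SIGMA i:{..<length \<alpha>}. {..<\<alpha>!i})"
  define cell where "cell = (\<lambda>(i::nat, j::nat). (i, ov_mu \<alpha> \<beta> i + int j))"
  have inj: "inj_on cell S" unfolding cell_def S_def inj_on_def by auto
  have "cell ` S = ov_cells \<alpha> \<beta>"
  proof
    show "cell ` S \<subseteq> ov_cells \<alpha> \<beta>" unfolding cell_def S_def by (auto simp: in_cells)
    show "ov_cells \<alpha> \<beta> \<subseteq> cell ` S"
    proof
      fix p assume p: "p \<in> ov_cells \<alpha> \<beta>"
      obtain i c where pc: "p = (i, c)" by (cases p)
      have "i < length \<alpha>" "ov_mu \<alpha> \<beta> i \<le> c" "c < ov_mu \<alpha> \<beta> i + int (\<alpha>!i)" using p pc in_cells by auto
      then have "(i, nat (c - ov_mu \<alpha> \<beta> i)) \<in> S" "cell (i, nat (c - ov_mu \<alpha> \<beta> i)) = p" unfolding S_def cell_def pc by auto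
      then show "p \<in> cell ` S" by force
    qed
  qed
  then have "(\<Prod>c\<in>ov_cells \<alpha> \<beta>. x (T c)) = (\<Prod>p\<in>S. x (T (cell p)))"
    using prod.reindex[OF inj] by (simp add: comp_def)
  also have "\<dots> = (\<Prod>i<length \<alpha>. \<Prod>j<\<alpha>!i. x (T (i, ov_mu \<alpha> \<beta> i + int j)))"
    unfolding S_def cell_def by (simp add: prod.Sigma case_prod_beta)
  also have "\<dots> = tab_weight x (tab_rows T)"
    unfolding tab_weight_def tab_rows_def prod_list_concat_map
    by (simp add: comp_def prod.distinct_set_conv_list[symmetric] atLeast0LessThan)
  finally show ?thesis by simp
qed

theorem ov_schur_row_schur: "ov_schur n x \<alpha> \<beta> = row_schur n x \<alpha> \<beta>"
  unfolding ov_schur_def row_schur_def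
proof (rule sum.reindex_bij_witness[where i=rows_tab and j=tab_rows])
  fix T assume "T \<in> ssyt n (ov_cells \<alpha> \<beta>)"
  thus "rows_tab (tab_rows T) = T" "tab_rows T \<in> row_tabs n \<alpha> \<beta>"
    "tab_weight x (tab_rows T) = (\<Prod>c\<in>ov_cells \<alpha> \<beta>. x (T c))"
    using rows_tab_tab_rows tab_rows_row_tabs tab_weight_tab_rows by auto
next
  fix ws assume "ws \<in> row_tabs n \<alpha> \<beta>"
  thus "tab_rows (rows_tab ws) = ws" "rows_tab ws \<in> ssyt n (ov_cells \<alpha> \<beta>)"
    using tab_rows_rows_tab rows_tab_ssyt by auto
qed

end

lemma sorted_take_drop:
  assumes sB: "sorted B" and sA: "sorted A" and k: "k \<le> length B"
    and order: "0 < k \<Longrightarrow> j < length A \<Longrightarrow> B!(k-1) \<le> A!j"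
  shows "sorted (take k B @ drop j A)"
  unfolding sorted_append
proof (intro conjI ballI)
  fix y z assume y: "y \<in> set (take k B)" and z: "z \<in> set (drop j A)"
  obtain i where i: "i < k" "y = B!i" using y k by (auto simp: in_set_conv_nth)
  obtain i' where i': "j + i' < length A" "z = A!(j+i')"
    using z by (auto simp: in_set_conv_nth) (metis less_diff_conv add.commute)
  have "y \<le> B!(k-1)" using i k sorted_nth_mono[OF sB, of i "k-1"] by auto
  also have "\<dots> \<le> A!j" using order i i' by simp
  also have "\<dots> \<le> z" using i' sorted_nth_mono[OF sA, of j "j+i'"] by simp
  finally show "y \<le> z" .
qed (use sA sB in simp_all)

(* A (length p) lies above B (length q)
   with overlap r, and the overlap condition fails; j is the first shared position where it
   fails, i.e. B!(q-r+j) <= A!j.  Exchanging the tails gives a long row C = B[..q-r+j] @ A[j..]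
   of length p+q-r+1 and a short row D = A[..<j] @ B[q-r+j+1..] of length r-1.  The first
   lemma treats an explicit switching position, the second its inverse. *)
lemma switch_rows:
  fixes A B :: "nat list"
  assumes sA: "sorted A" and sB: "sorted B" and lA: "length A = p" and lB: "length B = q"
    and r: "1 \<le> r" "r \<le> p" "r \<le> q"
    and j: "j < r" "B!(q-r+j) \<le> A!j" "\<forall>i<j. A!i < B!(q-r+i)"
    and C: "C = take (q-r+j+1) B @ drop j A" and D: "D = take j A @ drop (q-r+j+1) B"
  shows "sorted C" "sorted D" "length C = p+q-r+1" "length D = r-1"
    "mset C + mset D = mset A + mset B"
    "take (q-r+1) C = take (q-r+1) B" "drop q C = drop (r-1) A"
    "(LEAST i. i < r \<and> (i = r-1 \<or> C!(q-r+i) \<le> D!i)) = j"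
    "take j D @ drop (q-r+j+1) C = A" "take (q-r+j+1) C @ drop j D = B"
proof -
  have lt: "length (take (q-r+j+1) B) = q-r+j+1" using lB j r by simp
  show "sorted C" unfolding C by (rule sorted_take_drop[OF sB sA]) (use lB j r in auto)
  have "A!(j-1) \<le> B!(q-r+j+1)" if "0 < j" "q-r+j+1 < length B"
  proof -
    have "A!(j-1) < B!(q-r+(j-1))" using j(3)[rule_format, of "j-1"] that by simp
    also have "\<dots> \<le> B!(q-r+j+1)" using sorted_nth_mono[OF sB] that by simp
    finally show ?thesis by simp
  qed
  then show "sorted D" unfolding D by (intro sorted_take_drop[OF sA sB]) (use lA j r in auto)
  show "length C = p+q-r+1" "length D = r-1" using C D lA lB j r by simp_all
  have "mset C + mset D = (mset (take j A) + mset (drop j A))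
      + (mset (take (q-r+j+1) B) + mset (drop (q-r+j+1) B))"
    using C D by (simp add: ac_simps)
  then show "mset C + mset D = mset A + mset B" by (simp flip: mset_append)
  show "take (q-r+1) C = take (q-r+1) B" using C lt by (simp add: take_append)
  show "drop q C = drop (r-1) A" using C lt j r lB by (simp add: drop_append)
  show "take j D @ drop (q-r+j+1) C = A" "take (q-r+j+1) C @ drop j D = B"
    using C D lt lA j r by simp_all
  show "(LEAST i. i < r \<and> (i = r-1 \<or> C!(q-r+i) \<le> D!i)) = j"
  proof (rule Least_equality)
    show "j < r \<and> (j = r - 1 \<or> C ! (q - r + j) \<le> D ! j)"
    proof (cases "j = r - 1")
      case False
      have "C!(q-r+j) = B!(q-r+j)" using C lt by (simp add: nth_append)
      also have "\<dots> \<le> B!(q-r+j+1)" using sorted_nth_mono[OF sB] lB j r False by auto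
      also have "\<dots> = D!j" using D j r lA lB False by (simp add: nth_append)
      finally show ?thesis using j by simp
    qed (use j in simp)
  next
    fix y assume y: "y < r \<and> (y = r - 1 \<or> C ! (q - r + y) \<le> D ! y)"
    show "j \<le> y"
    proof (rule ccontr)
      assume "\<not> j \<le> y"
      hence yj: "y < j" by simp
      have "C!(q-r+y) = B!(q-r+y)" using C lt yj by (simp add: nth_append)
      moreover have "D!y = A!y" using D yj lA j r by (simp add: nth_append)
      ultimately show False using y yj j(3) j(1) by auto
    qed
  qed
qed

lemma unswitch_rows:
  fixes C D :: "nat list"
  assumes sC: "sorted C" and sD: "sorted D" and lC: "length C = p+q-r+1" and lD: "length D = r-1"
    and r: "1 \<le> r" "r \<le> p" "r \<le> q"
    and i: "i < r" "i = r-1 \<or> C!(q-r+i) \<le> D!i" "\<forall>i'<i. \<not> (C!(q-r+i') \<le> D!i')"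
    and A: "A = take i D @ drop (q-r+i+1) C" and B: "B = take (q-r+i+1) C @ drop i D"
  shows "sorted A" "sorted B" "length A = p" "length B = q"
     "B!(q-r+i) \<le> A!i" "\<forall>i'<i. A!i' < B!(q-r+i')"
     "take (q-r+i+1) B @ drop i A = C" "take i A @ drop (q-r+i+1) B = D"
proof -
  have ltD: "length (take i D) = i" using lD i by simp
  have ltC: "length (take (q-r+i+1) C) = q-r+i+1" using lC i r by simp
  have "D!(i-1) \<le> C!(q-r+i+1)" if "0 < i" "q-r+i+1 < length C"
  proof -
    have "D!(i-1) < C!(q-r+(i-1))" using i(3)[rule_format, of "i-1"] that by (simp add: not_le)
    also have "\<dots> \<le> C!(q-r+i+1)" using sorted_nth_mono[OF sC] that by simp
    finally show ?thesis by simp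
  qed
  then show "sorted A" unfolding A by (intro sorted_take_drop[OF sD sC]) (use lD i in auto)
  show "sorted B" unfolding B by (rule sorted_take_drop[OF sC sD]) (use lC lD i r in auto)
  show lA: "length A = p" and lB: "length B = q" using A B lC lD i r by simp_all
  have "B!(q-r+i) = C!(q-r+i)" using B ltC by (simp add: nth_append)
  also have "\<dots> \<le> C!(q-r+i+1)" using sorted_nth_mono[OF sC] lC i r by auto
  also have "\<dots> = A!i" using A ltD lC i r by (simp add: nth_append)
  finally show "B!(q-r+i) \<le> A!i" .
  show "\<forall>i'<i. A!i' < B!(q-r+i')"
    using A B ltC ltD i(3) by (auto simp: nth_append not_le)
  show "take (q-r+i+1) B @ drop i A = C" "take i A @ drop (q-r+i+1) B = D"
    using A B ltC ltD by simp_all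
qed

definition switch_pos :: "nat \<Rightarrow> nat \<Rightarrow> nat list \<Rightarrow> nat list \<Rightarrow> nat" where
  "switch_pos r q A B = (LEAST j. j < r \<and> B!(q-r+j) \<le> A!j)"

definition switch_long :: "nat \<Rightarrow> nat \<Rightarrow> nat list \<Rightarrow> nat list \<Rightarrow> nat list" where
  "switch_long r q A B = take (q-r+switch_pos r q A B+1) B @ drop (switch_pos r q A B) A"

definition switch_short :: "nat \<Rightarrow> nat \<Rightarrow> nat list \<Rightarrow> nat list \<Rightarrow> nat list" where
  "switch_short r q A B = take (switch_pos r q A B) A @ drop (q-r+switch_pos r q A B+1) B"

definition unswitch_pos :: "nat \<Rightarrow> nat \<Rightarrow> nat list \<Rightarrow> nat list \<Rightarrow> nat" where
  "unswitch_pos r q C D = (LEAST i. i < r \<and> (i = r-1 \<or> C!(q-r+i) \<le> D!i))"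

definition unswitch_top :: "nat \<Rightarrow> nat \<Rightarrow> nat list \<Rightarrow> nat list \<Rightarrow> nat list" where
  "unswitch_top r q C D = take (unswitch_pos r q C D) D @ drop (q-r+unswitch_pos r q C D+1) C"

definition unswitch_bottom :: "nat \<Rightarrow> nat \<Rightarrow> nat list \<Rightarrow> nat list \<Rightarrow> nat list" where
  "unswitch_bottom r q C D = take (q-r+unswitch_pos r q C D+1) C @ drop (unswitch_pos r q C D) D"

lemma switch_props:
  assumes sA: "sorted A" and sB: "sorted B" and lA: "length A = p" and lB: "length B = q"
    and r: "1 \<le> r" "r \<le> p" "r \<le> q" and bad: "\<not> overlap_ok r A B"
  shows "sorted (switch_long r q A B)" "sorted (switch_short r q A B)"
    "length (switch_long r q A B) = p+q-r+1" "length (switch_short r q A B) = r-1"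
    "mset (switch_long r q A B) + mset (switch_short r q A B) = mset A + mset B"
    "take (q-r+1) (switch_long r q A B) = take (q-r+1) B"
    "drop q (switch_long r q A B) = drop (r-1) A"
    "unswitch_top r q (switch_long r q A B) (switch_short r q A B) = A"
    "unswitch_bottom r q (switch_long r q A B) (switch_short r q A B) = B"
proof -
  let ?j = "switch_pos r q A B"
  have "\<exists>j. j < r \<and> B!(q-r+j) \<le> A!j" using bad lB unfolding overlap_ok_def by (auto simp: not_less)
  then have j: "?j < r \<and> B!(q-r+?j) \<le> A!?j" unfolding switch_pos_def by (rule LeastI_ex)
  have first: "\<forall>i<?j. A!i < B!(q-r+i)"
  proof (intro allI impI)
    fix i assume "i < ?j"
    then have "\<not> (i < r \<and> B!(q-r+i) \<le> A!i)" unfolding switch_pos_def by (rule not_less_Least)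
    then show "A!i < B!(q-r+i)" using \<open>i < ?j\<close> j by simp
  qed
  note sw = switch_rows[OF sA sB lA lB r conjunct1[OF j] conjunct2[OF j] first
      switch_long_def switch_short_def]
  show "sorted (switch_long r q A B)" "sorted (switch_short r q A B)"
    "length (switch_long r q A B) = p+q-r+1" "length (switch_short r q A B) = r-1"
    "mset (switch_long r q A B) + mset (switch_short r q A B) = mset A + mset B"
    "take (q-r+1) (switch_long r q A B) = take (q-r+1) B"
    "drop q (switch_long r q A B) = drop (r-1) A" by (fact sw(1-7))+
  have pos: "unswitch_pos r q (switch_long r q A B) (switch_short r q A B) = ?j"
    unfolding unswitch_pos_def by (rule sw(8))
  show "unswitch_top r q (switch_long r q A B) (switch_short r q A B) = A"
    unfolding unswitch_top_def pos by (rule sw(9))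
  show "unswitch_bottom r q (switch_long r q A B) (switch_short r q A B) = B"
    unfolding unswitch_bottom_def pos by (rule sw(10))
qed

lemma unswitch_props:
  assumes sC: "sorted C" and sD: "sorted D" and lC: "length C = p+q-r+1" and lD: "length D = r-1"
    and r: "1 \<le> r" "r \<le> p" "r \<le> q"
  shows "sorted (unswitch_top r q C D)" "sorted (unswitch_bottom r q C D)"
    "length (unswitch_top r q C D) = p" "length (unswitch_bottom r q C D) = q"
    "\<not> overlap_ok r (unswitch_top r q C D) (unswitch_bottom r q C D)"
    "switch_long r q (unswitch_top r q C D) (unswitch_bottom r q C D) = C"
    "switch_short r q (unswitch_top r q C D) (unswitch_bottom r q C D) = D"
proof -
  let ?i = "unswitch_pos r q C D"
  have "\<exists>i. i < r \<and> (i = r-1 \<or> C!(q-r+i) \<le> D!i)" using r by (intro exI[of _ "r-1"]) auto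
  then have i: "?i < r \<and> (?i = r-1 \<or> C!(q-r+?i) \<le> D!?i)"
    unfolding unswitch_pos_def by (rule LeastI_ex)
  have first: "\<forall>i'<?i. \<not> (C!(q-r+i') \<le> D!i')"
  proof (intro allI impI)
    fix i' assume "i' < ?i"
    then have "\<not> (i' < r \<and> (i' = r-1 \<or> C!(q-r+i') \<le> D!i'))"
      unfolding unswitch_pos_def by (rule not_less_Least)
    then show "\<not> (C!(q-r+i') \<le> D!i')" using \<open>i' < ?i\<close> i by auto
  qed
  note un = unswitch_rows[OF sC sD lC lD r conjunct1[OF i] conjunct2[OF i] first
      unswitch_top_def unswitch_bottom_def]
  show "sorted (unswitch_top r q C D)" "sorted (unswitch_bottom r q C D)"
    "length (unswitch_top r q C D) = p" "length (unswitch_bottom r q C D) = q" by (fact un(1-4))+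
  show "\<not> overlap_ok r (unswitch_top r q C D) (unswitch_bottom r q C D)"
  proof
    assume "overlap_ok r (unswitch_top r q C D) (unswitch_bottom r q C D)"
    then have "unswitch_top r q C D ! ?i < unswitch_bottom r q C D ! (q - r + ?i)"
      unfolding overlap_ok_def using i un(4) by simp
    then show False using un(5) by simp
  qed
  have pos: "switch_pos r q (unswitch_top r q C D) (unswitch_bottom r q C D) = ?i"
    unfolding switch_pos_def
  proof (rule Least_equality)
    show "?i < r \<and> unswitch_bottom r q C D ! (q - r + ?i) \<le> unswitch_top r q C D ! ?i"
      using un(5) i by simp
    fix y assume "y < r \<and> unswitch_bottom r q C D ! (q - r + y) \<le> unswitch_top r q C D ! y"
    then show "?i \<le> y" using un(6) not_le by blast
  qed
  show "switch_long r q (unswitch_top r q C D) (unswitch_bottom r q C D) = C"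
    unfolding switch_long_def pos by (rule un(7))
  show "switch_short r q (unswitch_top r q C D) (unswitch_bottom r q C D) = D"
    unfolding switch_short_def pos by (rule un(8))
qed

lemma row_tabs_split1:
  assumes "length xb = length X" and lw: "length wX = length X"
  shows "wX @ C # wY \<in> row_tabs n (X @ c # Y) (xb @ yb) \<longleftrightarrow>
    map length wX = X \<and> length C = c \<and> map length wY = Y \<and>
    (\<forall>w\<in>set wX. row_word n w) \<and> row_word n C \<and> (\<forall>w\<in>set wY. row_word n w) \<and>
    overlaps_ok xb (wX @ [C]) \<and> overlaps_ok yb (C # wY)"
proof -
  have "map length (wX @ C # wY) = X @ c # Y \<longleftrightarrow>
      map length wX = X \<and> length C = c \<and> map length wY = Y"
    using lw by (auto simp: append_eq_append_conv)
  moreover have "overlaps_ok (xb @ yb) ((wX @ [C]) @ wY) = (overlaps_ok xb (wX @ [C]) \<and> overlaps_ok yb (C # wY))"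
    if "map length wX = X"
    using overlaps_ok_append[of xb "wX @ [C]" yb wY] that assms by auto
  ultimately show ?thesis unfolding row_tabs_def by auto
qed

lemma row_tabs_split2:
  assumes "length xb = length X" and lw: "length wX = length X"
  shows "wX @ A # B # wY \<in> row_tabs n (X @ p # q # Y) (xb @ b # yb) \<longleftrightarrow>
    map length wX = X \<and> length A = p \<and> length B = q \<and> map length wY = Y \<and>
    (\<forall>w\<in>set wX. row_word n w) \<and> row_word n A \<and> row_word n B \<and> (\<forall>w\<in>set wY. row_word n w) \<and>
    overlaps_ok xb (wX @ [A]) \<and> overlap_ok b A B \<and> overlaps_ok yb (B # wY)"
proof -
  have "map length (wX @ A # B # wY) = X @ p # q # Y \<longleftrightarrow>
      map length wX = X \<and> length A = p \<and> length B = q \<and> map length wY = Y"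
    using lw by (auto simp: append_eq_append_conv)
  moreover have "overlaps_ok (xb @ b # yb) ((wX @ [A]) @ B # wY)
      = (overlaps_ok xb (wX @ [A]) \<and> overlap_ok b A B \<and> overlaps_ok yb (B # wY))"
    if "map length wX = X"
    using overlaps_ok_append[of xb "wX @ [A]" "b # yb" "B # wY"] that assms by auto
  ultimately show ?thesis unfolding row_tabs_def by auto
qed

lemma row_tabs_decomp1:
  assumes "ws \<in> row_tabs n (X @ c # Y) bs"
  obtains wX C wY where "ws = wX @ C # wY" "length wX = length X"
proof -
  have "map length ws = X @ c # Y" using assms by (simp add: row_tabs_def)
  then have "length ws = length (X @ c # Y)" by (metis length_map)
  then have "length X < length ws" by simp
  then show thesis using that[of "take (length X) ws" "ws!length X" "drop (Suc (length X)) ws"]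
    by (simp add: id_take_nth_drop)
qed

lemma row_tabs_decomp2:
  assumes "ws \<in> row_tabs n (X @ p # q # Y) bs"
  obtains wX A B wY where "ws = wX @ A # B # wY" "length wX = length X"
proof -
  obtain wX C wY where e: "ws = wX @ C # wY" and l: "length wX = length X"
    using row_tabs_decomp1[of ws n X p "q # Y" bs] assms by auto
  have "map length ws = X @ p # q # Y" using assms by (simp add: row_tabs_def)
  then have "length ws = length (X @ p # q # Y)" by (metis length_map)
  then obtain B wY' where "wY = B # wY'" using e l by (cases wY) auto
  then show thesis using that e l by blast
qed

(* The overlap condition only sees the last g letters of the lower row and the first g
   letters of the upper row; switching leaves both unchanged (when g is small enough). *)
lemma overlap_ok_suffix:
  assumes "g \<le> m" "m \<le> length A" "m \<le> length C" "drop (length A - m) A = drop (length C - m) C"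
  shows "overlap_ok g u A = overlap_ok g u C"
proof -
  have "A!(length A - g + j) = C!(length C - g + j)" if "j < g" for j
  proof -
    have e1: "(length A - m) + (m - g + j) = length A - g + j"
      and e2: "(length C - m) + (m - g + j) = length C - g + j" using assms that by simp_all
    have "A!(length A - g + j) = drop (length A - m) A ! (m - g + j)"
      unfolding e1[symmetric] by (rule nth_drop[symmetric]) simp
    also have "\<dots> = drop (length C - m) C ! (m - g + j)" by (simp only: assms(4))
    also have "\<dots> = C!(length C - g + j)"
      unfolding e2[symmetric] by (rule nth_drop) simp
    finally show ?thesis .
  qed
  thus ?thesis unfolding overlap_ok_def by auto
qed

lemma overlap_ok_prefix:
  assumes "g \<le> m" "take m B = take m C"
  shows "overlap_ok g B v = overlap_ok g C v"
  using assms unfolding overlap_ok_def by (metis nth_take order_less_le_trans)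

lemma overlaps_ok_snoc:
  assumes "length xb = length wX"
  shows "overlaps_ok xb (wX @ [A]) = (wX = [] \<or> (overlaps_ok (butlast xb) wX \<and> overlap_ok (last xb) (last wX) A))"
proof (cases "wX = []")
  case False
  then have "xb \<noteq> []" using assms by auto
  then have "xb = butlast xb @ [last xb]" and len: "length (butlast xb) + 1 = length wX"
    using assms False by auto
  then have "overlaps_ok xb (wX @ [A]) = overlaps_ok (butlast xb @ [last xb]) (wX @ [A])" by simp
  also have "\<dots> = (overlaps_ok (butlast xb) wX \<and> overlaps_ok [last xb] [last wX, A])"
    by (rule overlaps_ok_append[OF len])
  finally show ?thesis using False by simp
qed simp

lemma overlaps_ok_replace_last:
  assumes "length xb = length wX" "wX \<noteq> [] \<Longrightarrow> last xb \<le> m" "m \<le> length A" "m \<le> length C"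
    "drop (length A - m) A = drop (length C - m) C"
  shows "overlaps_ok xb (wX @ [A]) = overlaps_ok xb (wX @ [C])"
  using overlaps_ok_snoc[OF assms(1), of A] overlaps_ok_snoc[OF assms(1), of C]
    overlap_ok_suffix[OF _ assms(3-5)] assms(2)
  by metis

lemma overlaps_ok_replace_first:
  assumes "wY \<noteq> [] \<Longrightarrow> hd yb \<le> m" "take m B = take m C"
  shows "overlaps_ok yb (B # wY) = overlaps_ok yb (C # wY)"
proof (cases wY)
  case (Cons v wY')
  show ?thesis
  proof (cases yb)
    case (Cons g yb')
    then have "g \<le> m" using assms(1) \<open>wY = v # wY'\<close> by simp
    then show ?thesis using overlap_ok_prefix[OF _ assms(2)] Cons \<open>wY = v # wY'\<close> by simp
  qed (simp add: Cons)
qed (cases yb; simp)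

definition switch_tab :: "nat \<Rightarrow> nat \<Rightarrow> nat \<Rightarrow> nat list list \<Rightarrow> nat list list \<times> nat list list" where
  "switch_tab s r q ws = ([switch_short r q (ws!s) (ws!Suc s)],
     take s ws @ switch_long r q (ws!s) (ws!Suc s) # drop (Suc (Suc s)) ws)"

definition unswitch_tab :: "nat \<Rightarrow> nat \<Rightarrow> nat \<Rightarrow> nat list list \<times> nat list list \<Rightarrow> nat list list" where
  "unswitch_tab s r q pr = take s (snd pr) @ unswitch_top r q (snd pr ! s) (hd (fst pr))
     # unswitch_bottom r q (snd pr ! s) (hd (fst pr)) # drop (Suc s) (snd pr)"

(* Switching rows s, s+1 of a row tableau with overlap 0 that is not a row tableau with
   overlap r yields a single row of length r-1 and a row tableau in which the two rows are
   merged into one of length p+q-r+1.  The bounds on the neighbouring overlaps guarantee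
   that the switched rows still fit with their neighbours. *)
lemma switch_row_tabs:
  assumes lx: "length xb = length X" and lw: "length wX = length X"
    and r: "1 \<le> r" "r \<le> p" "r \<le> q"
    and gx: "X \<noteq> [] \<Longrightarrow> last xb \<le> p - r + 1" and gy: "Y \<noteq> [] \<Longrightarrow> hd yb \<le> q - r + 1"
    and tab0: "wX @ A # B # wY \<in> row_tabs n (X @ p # q # Y) (xb @ 0 # yb)"
    and not_tabr: "wX @ A # B # wY \<notin> row_tabs n (X @ p # q # Y) (xb @ r # yb)"
  shows "[switch_short r q A B] \<in> row_tabs n [r-1] []"
    "wX @ switch_long r q A B # wY \<in> row_tabs n (X @ (p+q-r+1) # Y) (xb @ yb)"
    "switch_tab (length X) r q (wX @ A # B # wY) = ([switch_short r q A B], wX @ switch_long r q A B # wY)"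
    "unswitch_tab (length X) r q (switch_tab (length X) r q (wX @ A # B # wY)) = wX @ A # B # wY"
    "tab_weight x [switch_short r q A B] * tab_weight x (wX @ switch_long r q A B # wY)
      = tab_weight x (wX @ A # B # wY)"
proof -
  let ?C = "switch_long r q A B" and ?D = "switch_short r q A B"
  have P: "map length wX = X \<and> length A = p \<and> length B = q \<and> map length wY = Y \<and>
      (\<forall>w\<in>set wX. row_word n w) \<and> row_word n A \<and> row_word n B \<and> (\<forall>w\<in>set wY. row_word n w) \<and>
      overlaps_ok xb (wX @ [A]) \<and> overlaps_ok yb (B # wY)"
    using tab0 row_tabs_split2[OF lx lw] by simp
  have lxw: "length xb = length wX" and gxw: "wX \<noteq> [] \<Longrightarrow> last xb \<le> p - r + 1"
    and gyw: "wY \<noteq> [] \<Longrightarrow> hd yb \<le> q - r + 1" using lx lw gx gy P by auto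
  have bad: "\<not> overlap_ok r A B" using P not_tabr row_tabs_split2[OF lx lw] by simp
  have "sorted A" "sorted B" "length A = p" "length B = q" using P by (auto simp: row_word_def)
  note sw = switch_props[OF this r bad]
  have "set ?C \<union> set ?D = set A \<union> set B" using sw(5) by (metis set_mset_mset set_mset_union)
  then have rows: "row_word n ?C" "row_word n ?D" using sw(1,2) P by (auto simp: row_word_def)
  then show "[?D] \<in> row_tabs n [r-1] []" unfolding row_tabs_def using sw(4) by simp
  have "overlaps_ok xb (wX @ [A]) = overlaps_ok xb (wX @ [?C])"
    by (rule overlaps_ok_replace_last[OF lxw gxw]) (use \<open>length A = p\<close> sw(3,7) r in auto)
  moreover have "overlaps_ok yb (B # wY) = overlaps_ok yb (?C # wY)"
    by (rule overlaps_ok_replace_first[OF gyw]) (use sw(6) in auto)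
  ultimately show "wX @ ?C # wY \<in> row_tabs n (X @ (p+q-r+1) # Y) (xb @ yb)"
    using row_tabs_split1[OF lx lw] P sw(3) rows by simp
  show sw_tab: "switch_tab (length X) r q (wX @ A # B # wY) = ([?D], wX @ ?C # wY)"
    unfolding switch_tab_def using lw by (simp add: lw[symmetric] nth_append)
  show "unswitch_tab (length X) r q (switch_tab (length X) r q (wX @ A # B # wY)) = wX @ A # B # wY"
    unfolding sw_tab unswitch_tab_def using sw(8,9) by (simp add: lw[symmetric] nth_append)
  have "mset (?D @ concat wX @ ?C @ concat wY) = mset (concat wX @ A @ B @ concat wY)"
    using sw(5) by (simp add: ac_simps)
  then have "prod_list (map x (?D @ concat wX @ ?C @ concat wY)) = prod_list (map x (concat wX @ A @ B @ concat wY))"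
    by (rule prod_list_mset_eq)
  then show "tab_weight x [?D] * tab_weight x (wX @ ?C # wY) = tab_weight x (wX @ A # B # wY)"
    by (simp add: tab_weight_def)
qed

lemma unswitch_row_tabs:
  assumes lx: "length xb = length X" and lw: "length wX = length X"
    and r: "1 \<le> r" "r \<le> p" "r \<le> q"
    and gx: "X \<noteq> [] \<Longrightarrow> last xb \<le> p - r + 1" and gy: "Y \<noteq> [] \<Longrightarrow> hd yb \<le> q - r + 1"
    and short: "[D] \<in> row_tabs n [r-1] []"
    and merged: "wX @ C # wY \<in> row_tabs n (X @ (p+q-r+1) # Y) (xb @ yb)"
  shows "wX @ unswitch_top r q C D # unswitch_bottom r q C D # wY \<in> row_tabs n (X @ p # q # Y) (xb @ 0 # yb)"
    "wX @ unswitch_top r q C D # unswitch_bottom r q C D # wY \<notin> row_tabs n (X @ p # q # Y) (xb @ r # yb)"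
    "unswitch_tab (length X) r q ([D], wX @ C # wY) = wX @ unswitch_top r q C D # unswitch_bottom r q C D # wY"
    "switch_tab (length X) r q (unswitch_tab (length X) r q ([D], wX @ C # wY)) = ([D], wX @ C # wY)"
proof -
  let ?A = "unswitch_top r q C D" and ?B = "unswitch_bottom r q C D"
  have D: "length D = r - 1" "row_word n D" using short unfolding row_tabs_def by auto
  have P: "map length wX = X \<and> length C = p+q-r+1 \<and> map length wY = Y \<and>
      (\<forall>w\<in>set wX. row_word n w) \<and> row_word n C \<and> (\<forall>w\<in>set wY. row_word n w) \<and>
      overlaps_ok xb (wX @ [C]) \<and> overlaps_ok yb (C # wY)"
    using merged row_tabs_split1[OF lx lw] by simp
  have lxw: "length xb = length wX" and gxw: "wX \<noteq> [] \<Longrightarrow> last xb \<le> p - r + 1"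
    and gyw: "wY \<noteq> [] \<Longrightarrow> hd yb \<le> q - r + 1" using lx lw gx gy P by auto
  have "sorted C" "sorted D" "length C = p+q-r+1" using P D by (auto simp: row_word_def)
  note un = unswitch_props[OF this D(1) r]
  note sw = switch_props[OF un(1-4) r un(5), unfolded un(6,7)]
  have "set C \<union> set D = set ?A \<union> set ?B" using sw(5) by (metis set_mset_mset set_mset_union)
  then have rows: "row_word n ?A" "row_word n ?B" using un(1,2) P D by (auto simp: row_word_def)
  have "overlaps_ok xb (wX @ [?A]) = overlaps_ok xb (wX @ [C])"
    by (rule overlaps_ok_replace_last[OF lxw gxw]) (use \<open>length C = p+q-r+1\<close> un(3) sw(7) r in auto)
  moreover have "overlaps_ok yb (?B # wY) = overlaps_ok yb (C # wY)"
    by (rule overlaps_ok_replace_first[OF gyw]) (use sw(6) in auto)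
  ultimately show "wX @ ?A # ?B # wY \<in> row_tabs n (X @ p # q # Y) (xb @ 0 # yb)"
    using row_tabs_split2[OF lx lw] P un(3,4) rows by (simp add: overlap_ok_def)
  show "wX @ ?A # ?B # wY \<notin> row_tabs n (X @ p # q # Y) (xb @ r # yb)"
    using row_tabs_split2[OF lx lw] un(5) by simp
  show unsw_tab: "unswitch_tab (length X) r q ([D], wX @ C # wY) = wX @ ?A # ?B # wY"
    unfolding unswitch_tab_def by (simp add: lw[symmetric] nth_append)
  show "switch_tab (length X) r q (unswitch_tab (length X) r q ([D], wX @ C # wY)) = ([D], wX @ C # wY)"
    unfolding unsw_tab switch_tab_def using un(6,7) by (simp add: lw[symmetric] nth_append)
qed

(* The basic three-term relation, proved by the switching bijection between the row
   tableaux with overlap 0 but not r and pairs (row of length r-1, merged tableau). *)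
lemma row_schur_switch:
  fixes x :: "nat \<Rightarrow> 'a::comm_ring_1"
  assumes lx: "length xb = length X" and r: "1 \<le> r" "r \<le> p" "r \<le> q"
    and gx: "X \<noteq> [] \<Longrightarrow> last xb \<le> p - r + 1" and gy: "Y \<noteq> [] \<Longrightarrow> hd yb \<le> q - r + 1"
  shows "row_schur n x (X @ p # q # Y) (xb @ 0 # yb) = row_schur n x (X @ p # q # Y) (xb @ r # yb)
          + row_schur n x [r-1] [] * row_schur n x (X @ (p+q-r+1) # Y) (xb @ yb)"
proof -
  define S0 where "S0 = row_tabs n (X @ p # q # Y) (xb @ 0 # yb)"
  define Sr where "Sr = row_tabs n (X @ p # q # Y) (xb @ r # yb)"
  define S1 where "S1 = row_tabs n [r-1] []"
  define SL where "SL = row_tabs n (X @ (p+q-r+1) # Y) (xb @ yb)"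
  have "Sr \<subseteq> S0"
  proof
    fix ws assume ws: "ws \<in> Sr"
    then obtain wX A B wY where "ws = wX @ A # B # wY" "length wX = length X"
      unfolding Sr_def by (rule row_tabs_decomp2)
    then show "ws \<in> S0" using ws row_tabs_split2[OF lx, of wX] unfolding Sr_def S0_def
      by (simp add: overlap_ok_def)
  qed
  then have "row_schur n x (X @ p # q # Y) (xb @ 0 # yb) = sum (tab_weight x) (S0 - Sr) + sum (tab_weight x) Sr"
    unfolding row_schur_def S0_def[symmetric] using finite_row_tabs sum.subset_diff S0_def by metis
  also have "sum (tab_weight x) (S0 - Sr) = (\<Sum>pr\<in>S1 \<times> SL. tab_weight x (fst pr) * tab_weight x (snd pr))"
  proof (rule sum.reindex_bij_witness[where i="unswitch_tab (length X) r q" and j="switch_tab (length X) r q"])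
    fix ws assume ws: "ws \<in> S0 - Sr"
    then obtain wX A B wY where e: "ws = wX @ A # B # wY" and lw: "length wX = length X"
      unfolding S0_def by (blast elim: row_tabs_decomp2)
    note sw = switch_row_tabs[where X=X and Y=Y and A=A and B=B and wY=wY and n=n,
        OF lx lw r gx gy]
    show "switch_tab (length X) r q ws \<in> S1 \<times> SL"
      "unswitch_tab (length X) r q (switch_tab (length X) r q ws) = ws"
      "tab_weight x (fst (switch_tab (length X) r q ws)) * tab_weight x (snd (switch_tab (length X) r q ws))
        = tab_weight x ws"
      using ws sw unfolding S0_def Sr_def S1_def SL_def e by simp_all
  next
    fix pr assume "pr \<in> S1 \<times> SL"
    then obtain D vs where e: "pr = ([D], vs)" and D: "[D] \<in> S1" and vs: "vs \<in> SL"
      unfolding S1_def row_tabs_def by (cases pr) (auto simp: length_Suc_conv)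
    then obtain wX C wY where ev: "vs = wX @ C # wY" and lw: "length wX = length X"
      unfolding SL_def by (blast elim: row_tabs_decomp1)
    note un = unswitch_row_tabs[where X=X and Y=Y and D=D and C=C and wY=wY and n=n,
        OF lx lw r gx gy]
    show "unswitch_tab (length X) r q pr \<in> S0 - Sr" "switch_tab (length X) r q (unswitch_tab (length X) r q pr) = pr"
      using D vs un unfolding S0_def Sr_def S1_def SL_def e ev by simp_all
  qed
  also have "\<dots> = row_schur n x [r-1] [] * row_schur n x (X @ (p+q-r+1) # Y) (xb @ yb)"
    unfolding row_schur_def S1_def[symmetric] SL_def[symmetric] sum_product
    by (simp add: sum.cartesian_product case_prod_beta)
  finally show ?thesis unfolding row_schur_def Sr_def by (simp add: add.commute)
qed

lemma row_schur_factor: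
  assumes len: "length Ab + 1 = length A" and ne: "B \<noteq> []"
  shows "row_schur n x (A @ B) (Ab @ 0 # Bb) = row_schur n x A Ab * row_schur n x B Bb"
proof -
  have "row_schur n x (A @ B) (Ab @ 0 # Bb)
      = (\<Sum>pr\<in>row_tabs n A Ab \<times> row_tabs n B Bb. tab_weight x (fst pr @ snd pr))"
    unfolding row_schur_def
  proof (rule sum.reindex_bij_witness[where i="\<lambda>pr. fst pr @ snd pr"
        and j="\<lambda>ws. (take (length A) ws, drop (length A) ws)"])
    fix ws assume ws: "ws \<in> row_tabs n (A @ B) (Ab @ 0 # Bb)"
    then have len_ws: "map length ws = A @ B" and rows: "\<forall>w\<in>set ws. row_word n w"
      and ovl: "overlaps_ok (Ab @ 0 # Bb) (take (length A) ws @ drop (length A) ws)"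
      by (auto simp: row_tabs_def)
    have l1: "map length (take (length A) ws) = A" and l2: "map length (drop (length A) ws) = B"
      using len_ws by (metis append_eq_conv_conj take_map drop_map length_map)+
    have "length Ab + 1 = length (take (length A) ws)" "drop (length A) ws \<noteq> []"
      using l1 l2 len ne by (metis length_map, auto)
    then have "overlaps_ok Ab (take (length A) ws) \<and> overlaps_ok Bb (drop (length A) ws)"
      using ovl overlaps_ok_append_overlap by blast
    then show "(take (length A) ws, drop (length A) ws) \<in> row_tabs n A Ab \<times> row_tabs n B Bb"
      using l1 l2 rows by (auto simp: row_tabs_def dest: in_set_takeD in_set_dropD)
  next
    fix pr assume pr: "pr \<in> row_tabs n A Ab \<times> row_tabs n B Bb"
    then obtain w1 w2 where e: "pr = (w1, w2)" by (cases pr)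
    have h1: "map length w1 = A" "\<forall>w\<in>set w1. row_word n w" "overlaps_ok Ab w1"
      and h2: "map length w2 = B" "\<forall>w\<in>set w2. row_word n w" "overlaps_ok Bb w2"
      using pr e by (auto simp: row_tabs_def)
    have lw1: "length w1 = length A" using h1(1) by (metis length_map)
    show "(take (length A) (fst pr @ snd pr), drop (length A) (fst pr @ snd pr)) = pr"
      using e lw1 by simp
    have "length Ab + 1 = length w1" "w2 \<noteq> []" using lw1 len h2(1) ne by auto
    then show "fst pr @ snd pr \<in> row_tabs n (A @ B) (Ab @ 0 # Bb)"
      using h1 h2 e overlaps_ok_append_overlap[of Ab w1 w2 0 Bb] by (auto simp: row_tabs_def overlap_ok_def)
  qed simp_all
  also have "\<dots> = (\<Sum>w1\<in>row_tabs n A Ab. \<Sum>w2\<in>row_tabs n B Bb. tab_weight x w1 * tab_weight x w2)"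
    by (simp add: sum.cartesian_product case_prod_beta tab_weight_append)
  also have "\<dots> = row_schur n x A Ab * row_schur n x B Bb"
    unfolding row_schur_def sum_product by simp
  finally show ?thesis .
qed

lemma row_schur_empty_row: "row_schur n x [0] [] = 1"
proof -
  have "row_tabs n [0] [] = {[[]]}" unfolding row_tabs_def row_word_def by (auto simp: length_Suc_conv)
  then show ?thesis unfolding row_schur_def tab_weight_def by simp
qed

(* L and h are separate parameters so that the
   lemma can be applied by unification to shapes whose lengths are written differently. *)
lemma row_schur_overlap:
  assumes lx: "length xb = length X" and r: "1 \<le> r" "r \<le> p" "r \<le> q"
    and gx: "X \<noteq> [] \<Longrightarrow> last xb \<le> p - r + 1" and gy: "Y \<noteq> [] \<Longrightarrow> hd yb \<le> q - r + 1"
    and L: "L = p + q - r + 1" and h: "h = r - 1"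
  shows "row_schur n x (X @ p # q # Y) (xb @ r # yb)
    = row_schur n x (X @ [p]) xb * row_schur n x (q # Y) yb - row_schur n x [h] [] * row_schur n x (X @ L # Y) (xb @ yb)"
proof -
  have "row_schur n x (X @ p # q # Y) (xb @ 0 # yb) = row_schur n x ((X @ [p]) @ (q # Y)) (xb @ 0 # yb)"
    by simp
  also have "\<dots> = row_schur n x (X @ [p]) xb * row_schur n x (q # Y) yb"
    by (rule row_schur_factor) (use lx in auto)
  finally show ?thesis using row_schur_switch[OF lx r gx gy, where n=n and x=x] L h
    by (simp add: algebra_simps)
qed

lemma row_schur_overlap_one:
  assumes lx: "length xb = length X" and "1 \<le> p" "1 \<le> q"
    and gx: "X \<noteq> [] \<Longrightarrow> last xb \<le> p" and gy: "Y \<noteq> [] \<Longrightarrow> hd yb \<le> q" and L: "L = p + q"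
  shows "row_schur n x (X @ p # q # Y) (xb @ 1 # yb)
    = row_schur n x (X @ [p]) xb * row_schur n x (q # Y) yb - row_schur n x (X @ L # Y) (xb @ yb)"
proof -
  have "row_schur n x (X @ p # q # Y) (xb @ 1 # yb) = row_schur n x (X @ [p]) xb * row_schur n x (q # Y) yb
      - row_schur n x [0] [] * row_schur n x (X @ L # Y) (xb @ yb)"
    by (rule row_schur_overlap) (use assms in auto)
  then show ?thesis by (simp add: row_schur_empty_row)
qed

definition upper_ok :: "nat list \<Rightarrow> nat list \<Rightarrow> bool" where
  "upper_ok \<sigma> \<sigma>b \<longleftrightarrow> length \<sigma>b = length \<sigma> \<and> (\<sigma> \<noteq> [] \<longrightarrow> last \<sigma>b \<le> 1)"

definition lower_ok :: "nat list \<Rightarrow> nat list \<Rightarrow> bool" where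
  "lower_ok \<tau> \<tau>b \<longleftrightarrow> length \<tau>b = length \<tau> \<and> (\<tau> \<noteq> [] \<longrightarrow> hd \<tau>b = 1 \<and> 1 \<le> hd \<tau>) \<and>
     (2 \<le> length \<tau> \<longrightarrow> \<tau>b!1 \<le> \<tau>!0)"

lemma upper_ok_snoc: "upper_ok \<sigma> \<sigma>b \<Longrightarrow> upper_ok (\<sigma> @ [p] @ replicate m a) (\<sigma>b @ replicate (Suc m) 1)"
  unfolding upper_ok_def by (cases m) auto

lemma lower_ok_Cons: "lower_ok \<tau> \<tau>b \<Longrightarrow> 1 \<le> a \<Longrightarrow> lower_ok (a # \<tau>) (1 # \<tau>b)"
  unfolding lower_ok_def by (cases \<tau>b) auto

(* The term of the right-hand side that involves tau_1, expressed through the relations. *)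
lemma row_schur_tail_term:
  assumes up: "upper_ok Q Qb" and K: "2 \<le> K" and low: "lower_ok \<tau> \<tau>b"
  shows "(if \<tau> = [] then 0 else row_schur n x (Q @ K # (K-1+hd \<tau>) # tl \<tau>) (Qb @ K # tl \<tau>b))
    = - row_schur n x (Q @ [K]) Qb * row_schur n x ((K-1) # \<tau>) \<tau>b
      + row_schur n x [K-1] [] * row_schur n x (Q @ K # \<tau>) (Qb @ \<tau>b)"
proof (cases \<tau>)
  case (Cons t \<tau>')
  obtain \<tau>b' where tb: "\<tau>b = 1 # \<tau>b'" using low Cons unfolding lower_ok_def by (cases \<tau>b) auto
  have t: "1 \<le> t" and lq: "length Qb = length Q" and gq: "Q \<noteq> [] \<Longrightarrow> last Qb \<le> 1"
    using low up Cons unfolding lower_ok_def upper_ok_def by auto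
  have gt: "\<tau>' \<noteq> [] \<Longrightarrow> hd \<tau>b' \<le> t"
    using low Cons tb unfolding lower_ok_def by (cases \<tau>b'; cases \<tau>') auto
  have e1: "row_schur n x (Q @ K # (K-1+t) # \<tau>') (Qb @ K # \<tau>b')
     = row_schur n x (Q @ [K]) Qb * row_schur n x ((K-1+t) # \<tau>') \<tau>b'
       - row_schur n x [K-1] [] * row_schur n x (Q @ (K+t) # \<tau>') (Qb @ \<tau>b')"
    by (rule row_schur_overlap) (use lq gq K t gt in auto)
  have e2: "row_schur n x ([] @ (K-1) # t # \<tau>') ([] @ 1 # \<tau>b')
     = row_schur n x ([] @ [K-1]) [] * row_schur n x (t # \<tau>') \<tau>b'
       - row_schur n x ([] @ (K-1+t) # \<tau>') ([] @ \<tau>b')"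
    by (rule row_schur_overlap_one) (use K t gt in auto)
  have e3: "row_schur n x (Q @ K # t # \<tau>') (Qb @ 1 # \<tau>b')
     = row_schur n x (Q @ [K]) Qb * row_schur n x (t # \<tau>') \<tau>b' - row_schur n x (Q @ (K+t) # \<tau>') (Qb @ \<tau>b')"
    by (rule row_schur_overlap_one) (use lq gq K t gt in auto)
  have "row_schur n x (Q @ K # (K-1+t) # \<tau>') (Qb @ K # \<tau>b')
     = - row_schur n x (Q @ [K]) Qb * row_schur n x ((K-1) # t # \<tau>') (1 # \<tau>b')
       + row_schur n x [K-1] [] * row_schur n x (Q @ K # t # \<tau>') (Qb @ 1 # \<tau>b')"
    unfolding e1 e2[unfolded append_Nil] e3 by (simp add: algebra_simps)
  then show ?thesis using Cons tb by simp
qed (use low in \<open>simp add: lower_ok_def\<close>)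

(* Rewrites the reassociated list instances produced by applying the relations back into
   the normal form of the statements. *)
lemmas append_normalise = append_assoc append_Cons append_Nil

lemma row_schur_last_summand:
  assumes up: "upper_ok P Pb" and a: "2 \<le> a" and low: "lower_ok \<tau> \<tau>b"
  shows "row_schur n x (P @ a # (a+c-1) # (a+c) # \<tau>) (Pb @ 1 # (c+1) # \<tau>b)
       - row_schur n x (P @ a # (a+c) # (a+c-1) # \<tau>) (Pb @ 1 # (c+1) # \<tau>b)
     = (if \<tau> = [] then 0 else
            row_schur n x (P @ a # (a+c) # (a+c-1+hd \<tau>) # tl \<tau>) (Pb @ 1 # (a+c) # tl \<tau>b))
       - row_schur n x (P @ (a+a+c-1) # (a+c) # \<tau>) (Pb @ (a+c) # \<tau>b)"
proof -
  have lp: "length Pb = length P" and gp: "P \<noteq> [] \<Longrightarrow> last Pb \<le> 1"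
    and gy: "\<tau> \<noteq> [] \<Longrightarrow> hd \<tau>b \<le> 1" using up low unfolding upper_ok_def lower_ok_def by auto
  have up1: "upper_ok (P @ [a]) (Pb @ [1])" using lp unfolding upper_ok_def by simp
  have f1: "row_schur n x ((P @ [a]) @ (a+c-1) # (a+c) # \<tau>) ((Pb @ [1]) @ (c+1) # \<tau>b)
     = row_schur n x ((P @ [a]) @ [a+c-1]) (Pb @ [1]) * row_schur n x ((a+c) # \<tau>) \<tau>b
       - row_schur n x [c] [] * row_schur n x ((P @ [a]) @ (a+a+c-1) # \<tau>) ((Pb @ [1]) @ \<tau>b)"
    by (rule row_schur_overlap) (use lp a gy in auto)
  have f2: "row_schur n x ((P @ [a]) @ (a+c) # (a+c-1) # \<tau>) ((Pb @ [1]) @ (c+1) # \<tau>b)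
     = row_schur n x ((P @ [a]) @ [a+c]) (Pb @ [1]) * row_schur n x ((a+c-1) # \<tau>) \<tau>b
       - row_schur n x [c] [] * row_schur n x ((P @ [a]) @ (a+a+c-1) # \<tau>) ((Pb @ [1]) @ \<tau>b)"
    by (rule row_schur_overlap) (use lp a gy in auto)
  have f3: "(if \<tau> = [] then 0 else
        row_schur n x ((P @ [a]) @ (a+c) # (a+c-1+hd \<tau>) # tl \<tau>) ((Pb @ [1]) @ (a+c) # tl \<tau>b))
     = - row_schur n x ((P @ [a]) @ [a+c]) (Pb @ [1]) * row_schur n x ((a+c-1) # \<tau>) \<tau>b
       + row_schur n x [a+c-1] [] * row_schur n x ((P @ [a]) @ (a+c) # \<tau>) ((Pb @ [1]) @ \<tau>b)"
    by (rule row_schur_tail_term) (use up1 a low in auto)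
  have f4: "row_schur n x (P @ (a+a+c-1) # (a+c) # \<tau>) (Pb @ (a+c) # \<tau>b)
     = row_schur n x (P @ [a+a+c-1]) Pb * row_schur n x ((a+c) # \<tau>) \<tau>b
       - row_schur n x [a+c-1] [] * row_schur n x (P @ (a+a+c) # \<tau>) (Pb @ \<tau>b)"
    by (rule row_schur_overlap) (use lp gp a gy in auto)
  have f5: "row_schur n x (P @ a # (a+c-1) # []) (Pb @ 1 # [])
     = row_schur n x (P @ [a]) Pb * row_schur n x ((a+c-1) # []) [] - row_schur n x (P @ (a+a+c-1) # []) (Pb @ [])"
    by (rule row_schur_overlap_one) (use lp gp a in auto)
  have f6: "row_schur n x (P @ a # (a+c) # \<tau>) (Pb @ 1 # \<tau>b)
     = row_schur n x (P @ [a]) Pb * row_schur n x ((a+c) # \<tau>) \<tau>b - row_schur n x (P @ (a+a+c) # \<tau>) (Pb @ \<tau>b)"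
    by (rule row_schur_overlap_one) (use lp gp a gy in auto)
  show ?thesis
    unfolding f1[unfolded append_normalise] f2[unfolded append_normalise] f3[unfolded append_normalise]
      f4 f5[unfolded append_Nil2] f6
    by (simp add: algebra_simps)
qed

(* The identity for M = 1 (with k*a = a + c): every term is expanded by the relations into
   products, and the products cancel. *)
lemma row_schur_identity_one:
  assumes up: "upper_ok \<sigma> \<sigma>b" and a: "2 \<le> a" and low: "lower_ok \<tau> \<tau>b"
  shows "row_schur n x (\<sigma> @ (a+c) # (a+c) # a # \<tau>) (\<sigma>b @ (c+1) # 1 # \<tau>b)
       - row_schur n x (\<sigma> @ (a+c+1) # (a+c-1) # a # \<tau>) (\<sigma>b @ (c+1) # 1 # \<tau>b)
       + (row_schur n x (\<sigma> @ (a+1) # (a+c-1) # (a+c) # \<tau>) (\<sigma>b @ 1 # (c+1) # \<tau>b)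
        - row_schur n x (\<sigma> @ (a+1) # (a+c) # (a+c-1) # \<tau>) (\<sigma>b @ 1 # (c+1) # \<tau>b))
     = row_schur n x (\<sigma> @ (a+c) # (a+c) # a # \<tau>) (\<sigma>b @ (a+c) # 1 # \<tau>b)
       + row_schur n x (\<sigma> @ (a+c+1) # (a+a+c-1) # \<tau>) (\<sigma>b @ (a+c) # \<tau>b)
       - row_schur n x (\<sigma> @ (a+a+c) # (a+c) # \<tau>) (\<sigma>b @ (a+c) # \<tau>b)
       + (if \<tau> = [] then 0 else
            row_schur n x (\<sigma> @ (a+1) # (a+c) # (a+c-1+hd \<tau>) # tl \<tau>) (\<sigma>b @ 1 # (a+c) # tl \<tau>b))"
proof -
  have ls: "length \<sigma>b = length \<sigma>" and gs: "\<sigma> \<noteq> [] \<Longrightarrow> last \<sigma>b \<le> 1"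
    and gy: "\<tau> \<noteq> [] \<Longrightarrow> hd \<tau>b \<le> 1" using up low unfolding upper_ok_def lower_ok_def by auto
  have up1: "upper_ok (\<sigma> @ [a+1]) (\<sigma>b @ [1])" using ls unfolding upper_ok_def by simp
  note rel = row_schur_overlap[where n=n and x=x] and rel1 = row_schur_overlap_one[where n=n and x=x]
  have l1: "row_schur n x (\<sigma> @ (a+c) # (a+c) # (a # \<tau>)) (\<sigma>b @ (c+1) # (1 # \<tau>b))
     = row_schur n x (\<sigma> @ [a+c]) \<sigma>b * row_schur n x ((a+c) # a # \<tau>) (1 # \<tau>b)
       - row_schur n x [c] [] * row_schur n x (\<sigma> @ (a+a+c) # a # \<tau>) (\<sigma>b @ 1 # \<tau>b)"
    by (rule rel) (use ls gs a in auto)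
  have l2: "row_schur n x (\<sigma> @ (a+c+1) # (a+c-1) # (a # \<tau>)) (\<sigma>b @ (c+1) # (1 # \<tau>b))
     = row_schur n x (\<sigma> @ [a+c+1]) \<sigma>b * row_schur n x ((a+c-1) # a # \<tau>) (1 # \<tau>b)
       - row_schur n x [c] [] * row_schur n x (\<sigma> @ (a+a+c) # a # \<tau>) (\<sigma>b @ 1 # \<tau>b)"
    by (rule rel) (use ls gs a in auto)
  have l3: "row_schur n x ((\<sigma> @ [a+1]) @ (a+c-1) # (a+c) # \<tau>) ((\<sigma>b @ [1]) @ (c+1) # \<tau>b)
     = row_schur n x ((\<sigma> @ [a+1]) @ [a+c-1]) (\<sigma>b @ [1]) * row_schur n x ((a+c) # \<tau>) \<tau>b
       - row_schur n x [c] [] * row_schur n x ((\<sigma> @ [a+1]) @ (a+a+c-1) # \<tau>) ((\<sigma>b @ [1]) @ \<tau>b)"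
    by (rule rel) (use ls a gy in auto)
  have l4: "row_schur n x ((\<sigma> @ [a+1]) @ (a+c) # (a+c-1) # \<tau>) ((\<sigma>b @ [1]) @ (c+1) # \<tau>b)
     = row_schur n x ((\<sigma> @ [a+1]) @ [a+c]) (\<sigma>b @ [1]) * row_schur n x ((a+c-1) # \<tau>) \<tau>b
       - row_schur n x [c] [] * row_schur n x ((\<sigma> @ [a+1]) @ (a+a+c-1) # \<tau>) ((\<sigma>b @ [1]) @ \<tau>b)"
    by (rule rel) (use ls a gy in auto)
  have r1: "row_schur n x (\<sigma> @ (a+c) # (a+c) # (a # \<tau>)) (\<sigma>b @ (a+c) # (1 # \<tau>b))
     = row_schur n x (\<sigma> @ [a+c]) \<sigma>b * row_schur n x ((a+c) # a # \<tau>) (1 # \<tau>b)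
       - row_schur n x [a+c-1] [] * row_schur n x (\<sigma> @ (a+c+1) # a # \<tau>) (\<sigma>b @ 1 # \<tau>b)"
    by (rule rel) (use ls gs a in auto)
  have r2: "row_schur n x (\<sigma> @ (a+c+1) # (a+a+c-1) # \<tau>) (\<sigma>b @ (a+c) # \<tau>b)
     = row_schur n x (\<sigma> @ [a+c+1]) \<sigma>b * row_schur n x ((a+a+c-1) # \<tau>) \<tau>b
       - row_schur n x [a+c-1] [] * row_schur n x (\<sigma> @ (a+a+c+1) # \<tau>) (\<sigma>b @ \<tau>b)"
    by (rule rel) (use ls gs a gy in auto)
  have r3: "row_schur n x (\<sigma> @ (a+a+c) # (a+c) # \<tau>) (\<sigma>b @ (a+c) # \<tau>b)
     = row_schur n x (\<sigma> @ [a+a+c]) \<sigma>b * row_schur n x ((a+c) # \<tau>) \<tau>b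
       - row_schur n x [a+c-1] [] * row_schur n x (\<sigma> @ (a+a+c+1) # \<tau>) (\<sigma>b @ \<tau>b)"
    by (rule rel) (use ls gs a gy in auto)
  have r4: "(if \<tau> = [] then 0 else
        row_schur n x ((\<sigma> @ [a+1]) @ (a+c) # (a+c-1+hd \<tau>) # tl \<tau>) ((\<sigma>b @ [1]) @ (a+c) # tl \<tau>b))
     = - row_schur n x ((\<sigma> @ [a+1]) @ [a+c]) (\<sigma>b @ [1]) * row_schur n x ((a+c-1) # \<tau>) \<tau>b
       + row_schur n x [a+c-1] [] * row_schur n x ((\<sigma> @ [a+1]) @ (a+c) # \<tau>) ((\<sigma>b @ [1]) @ \<tau>b)"
    by (rule row_schur_tail_term) (use up1 a low in auto)
  have p1: "row_schur n x ([] @ (a+c-1) # a # \<tau>) ([] @ 1 # \<tau>b)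
     = row_schur n x ([] @ [a+c-1]) [] * row_schur n x (a # \<tau>) \<tau>b - row_schur n x ([] @ (a+a+c-1) # \<tau>) ([] @ \<tau>b)"
    by (rule rel1) (use a gy in auto)
  have p2: "row_schur n x (\<sigma> @ (a+1) # (a+c-1) # []) (\<sigma>b @ 1 # [])
     = row_schur n x (\<sigma> @ [a+1]) \<sigma>b * row_schur n x ((a+c-1) # []) [] - row_schur n x (\<sigma> @ (a+a+c) # []) (\<sigma>b @ [])"
    by (rule rel1) (use ls gs a in auto)
  have p3: "row_schur n x (\<sigma> @ (a+c+1) # a # \<tau>) (\<sigma>b @ 1 # \<tau>b)
     = row_schur n x (\<sigma> @ [a+c+1]) \<sigma>b * row_schur n x (a # \<tau>) \<tau>b - row_schur n x (\<sigma> @ (a+a+c+1) # \<tau>) (\<sigma>b @ \<tau>b)"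
    by (rule rel1) (use ls gs a gy in auto)
  have p4: "row_schur n x (\<sigma> @ (a+1) # (a+c) # \<tau>) (\<sigma>b @ 1 # \<tau>b)
     = row_schur n x (\<sigma> @ [a+1]) \<sigma>b * row_schur n x ((a+c) # \<tau>) \<tau>b - row_schur n x (\<sigma> @ (a+a+c+1) # \<tau>) (\<sigma>b @ \<tau>b)"
    by (rule rel1) (use ls gs a gy in auto)
  show ?thesis
    unfolding l1 l2 l3[unfolded append_normalise] l4[unfolded append_normalise] r1 r2 r3
      r4[unfolded append_normalise] p1[unfolded append_normalise] p2[unfolded append_Nil2] p3 p4
    by (simp add: algebra_simps)
qed

(* The two sides of the identity, for an arbitrary evaluation F of overlap data and with
   k*a written as a + c.  lhs_summand / rhs_summand are the i-th summands of the sums. *)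
definition lhs_summand :: "(nat list \<Rightarrow> nat list \<Rightarrow> 'a::ab_group_add) \<Rightarrow> nat list \<Rightarrow> nat list \<Rightarrow>
    nat \<Rightarrow> nat \<Rightarrow> nat \<Rightarrow> nat list \<Rightarrow> nat list \<Rightarrow> nat \<Rightarrow> 'a" where
  "lhs_summand F \<sigma> \<sigma>b a c M \<tau> \<tau>b i =
      F (\<sigma> @ [a+1] @ replicate (i-1) a @ [a+c-1, a+c] @ replicate (M-i) a @ \<tau>)
        (\<sigma>b @ replicate i 1 @ [c+1] @ replicate (M-i) 1 @ \<tau>b)
    - F (\<sigma> @ [a+1] @ replicate (i-1) a @ [a+c, a+c-1] @ replicate (M-i) a @ \<tau>)
        (\<sigma>b @ replicate i 1 @ [c+1] @ replicate (M-i) 1 @ \<tau>b)"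

definition rhs_summand :: "(nat list \<Rightarrow> nat list \<Rightarrow> 'a::ab_group_add) \<Rightarrow> nat list \<Rightarrow> nat list \<Rightarrow>
    nat \<Rightarrow> nat \<Rightarrow> nat \<Rightarrow> nat list \<Rightarrow> nat list \<Rightarrow> nat \<Rightarrow> 'a" where
  "rhs_summand F \<sigma> \<sigma>b a c M \<tau> \<tau>b i =
      F (\<sigma> @ [a+1] @ replicate (i-1) a @ [a+c, a+a+c-1] @ replicate (M-1-i) a @ \<tau>)
        (\<sigma>b @ replicate i 1 @ [a+c] @ replicate (M-i-1) 1 @ \<tau>b)
    - F (\<sigma> @ [a+1] @ replicate (i-1) a @ [a+a+c-1, a+c] @ replicate (M-1-i) a @ \<tau>)
        (\<sigma>b @ replicate i 1 @ [a+c] @ replicate (M-i-1) 1 @ \<tau>b)"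

definition tail_term :: "(nat list \<Rightarrow> nat list \<Rightarrow> 'a::ab_group_add) \<Rightarrow> nat list \<Rightarrow> nat list \<Rightarrow>
    nat \<Rightarrow> nat \<Rightarrow> nat \<Rightarrow> nat list \<Rightarrow> nat list \<Rightarrow> 'a" where
  "tail_term F \<sigma> \<sigma>b a c M \<tau> \<tau>b = (if \<tau> = [] then 0 else
      F (\<sigma> @ [a+1] @ replicate (M-1) a @ [a+c, a+c-1 + hd \<tau>] @ tl \<tau>)
        (\<sigma>b @ replicate M 1 @ [a+c] @ tl \<tau>b))"

definition lhs :: "(nat list \<Rightarrow> nat list \<Rightarrow> 'a::ab_group_add) \<Rightarrow> nat list \<Rightarrow> nat list \<Rightarrow>
    nat \<Rightarrow> nat \<Rightarrow> nat \<Rightarrow> nat list \<Rightarrow> nat list \<Rightarrow> 'a" where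
  "lhs F \<sigma> \<sigma>b a c M \<tau> \<tau>b =
      F (\<sigma> @ [a+c, a+c] @ replicate M a @ \<tau>) (\<sigma>b @ [c+1] @ replicate M 1 @ \<tau>b)
    - F (\<sigma> @ [a+c+1, a+c-1] @ replicate M a @ \<tau>) (\<sigma>b @ [c+1] @ replicate M 1 @ \<tau>b)
    + (\<Sum>i=1..M. lhs_summand F \<sigma> \<sigma>b a c M \<tau> \<tau>b i)"

definition rhs :: "(nat list \<Rightarrow> nat list \<Rightarrow> 'a::ab_group_add) \<Rightarrow> nat list \<Rightarrow> nat list \<Rightarrow>
    nat \<Rightarrow> nat \<Rightarrow> nat \<Rightarrow> nat list \<Rightarrow> nat list \<Rightarrow> 'a" where
  "rhs F \<sigma> \<sigma>b a c M \<tau> \<tau>b =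
      F (\<sigma> @ [a+c, a+c] @ replicate M a @ \<tau>) (\<sigma>b @ [a+c] @ replicate M 1 @ \<tau>b)
    + F (\<sigma> @ [a+c+1, a+a+c-1] @ replicate (M-1) a @ \<tau>) (\<sigma>b @ [a+c] @ replicate (M-1) 1 @ \<tau>b)
    - F (\<sigma> @ [a+a+c, a+c] @ replicate (M-1) a @ \<tau>) (\<sigma>b @ [a+c] @ replicate (M-1) 1 @ \<tau>b)
    + tail_term F \<sigma> \<sigma>b a c M \<tau> \<tau>b
    + (\<Sum>i=1..M-1. rhs_summand F \<sigma> \<sigma>b a c M \<tau> \<tau>b i)"

(* Passing from M+1 to M by regarding the last row of length a as the first row of tau:
   every term except the last summand is unchanged. *)
lemma lhs_Suc:
  "lhs F \<sigma> \<sigma>b a c (Suc M) \<tau> \<tau>b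
     = lhs F \<sigma> \<sigma>b a c M (a # \<tau>) (1 # \<tau>b) + lhs_summand F \<sigma> \<sigma>b a c (Suc M) \<tau> \<tau>b (Suc M)"
proof -
  have "lhs_summand F \<sigma> \<sigma>b a c (Suc M) \<tau> \<tau>b i = lhs_summand F \<sigma> \<sigma>b a c M (a # \<tau>) (1 # \<tau>b) i"
    if "i \<le> M" for i
    using that unfolding lhs_summand_def by (simp add: Suc_diff_le replicate_app_Cons_same)
  then show ?thesis unfolding lhs_def by (simp add: replicate_app_Cons_same)
qed

lemma rhs_Suc:
  assumes "1 \<le> M" "1 \<le> a"
  shows "rhs F \<sigma> \<sigma>b a c (Suc M) \<tau> \<tau>b
     = rhs F \<sigma> \<sigma>b a c M (a # \<tau>) (1 # \<tau>b) + tail_term F \<sigma> \<sigma>b a c (Suc M) \<tau> \<tau>b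
       - F (\<sigma> @ [a+1] @ replicate (M-1) a @ [a+a+c-1, a+c] @ \<tau>) (\<sigma>b @ replicate M 1 @ [a+c] @ \<tau>b)"
proof -
  have shift: "rhs_summand F \<sigma> \<sigma>b a c (Suc M) \<tau> \<tau>b i = rhs_summand F \<sigma> \<sigma>b a c M (a # \<tau>) (1 # \<tau>b) i"
    if "i \<le> M - 1" for i
  proof -
    have "Suc M - 1 - i = Suc (M - 1 - i)" "Suc M - i - 1 = Suc (M - i - 1)" using that assms by simp_all
    then show ?thesis unfolding rhs_summand_def by (simp add: replicate_app_Cons_same)
  qed
  have "(\<Sum>i=1..M. rhs_summand F \<sigma> \<sigma>b a c (Suc M) \<tau> \<tau>b i)
      = (\<Sum>i=1..M-1. rhs_summand F \<sigma> \<sigma>b a c M (a # \<tau>) (1 # \<tau>b) i)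
        + rhs_summand F \<sigma> \<sigma>b a c (Suc M) \<tau> \<tau>b M"
    using assms(1) shift by (cases M) (simp_all add: sum.cl_ivl_Suc)
  moreover have "a + c - 1 + a = a + a + c - 1" using assms(2) by simp
  ultimately show ?thesis using assms(1)
    unfolding rhs_def tail_term_def rhs_summand_def by (cases M) (simp_all add: replicate_app_Cons_same)
qed

theorem row_schur_identity:
  assumes up: "upper_ok \<sigma> \<sigma>b" and a: "2 \<le> a" and M: "1 \<le> M"
  shows "lower_ok \<tau> \<tau>b \<Longrightarrow> lhs (row_schur n x) \<sigma> \<sigma>b a c M \<tau> \<tau>b = rhs (row_schur n x) \<sigma> \<sigma>b a c M \<tau> \<tau>b"
  using M
proof (induction M arbitrary: \<tau> \<tau>b rule: nat_induct_at_least)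
  case base
  then show ?case using row_schur_identity_one[OF up a, of \<tau> \<tau>b n x c]
    unfolding lhs_def rhs_def lhs_summand_def tail_term_def by simp
next
  case (Suc M)
  define Em where "Em = row_schur n x (\<sigma> @ [a+1] @ replicate (M-1) a @ [a+a+c-1, a+c] @ \<tau>)
    (\<sigma>b @ replicate M 1 @ [a+c] @ \<tau>b)"
  have last: "lhs_summand (row_schur n x) \<sigma> \<sigma>b a c (Suc M) \<tau> \<tau>b (Suc M)
      = tail_term (row_schur n x) \<sigma> \<sigma>b a c (Suc M) \<tau> \<tau>b - Em"
  proof -
    obtain m where m: "M = Suc m" using Suc.hyps by (cases M) auto
    show ?thesis
      using row_schur_last_summand[OF upper_ok_snoc[OF up, of "a+1" m a] a Suc.prems, of n x c]
      unfolding lhs_summand_def tail_term_def Em_def m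
      by (cases "\<tau> = []") (simp_all add: replicate_app_Cons_same)
  qed
  have rs: "rhs (row_schur n x) \<sigma> \<sigma>b a c (Suc M) \<tau> \<tau>b = rhs (row_schur n x) \<sigma> \<sigma>b a c M (a # \<tau>) (1 # \<tau>b)
      + tail_term (row_schur n x) \<sigma> \<sigma>b a c (Suc M) \<tau> \<tau>b - Em"
    unfolding Em_def by (rule rhs_Suc[OF Suc.hyps]) (use a in simp)
  have "lower_ok (a # \<tau>) (1 # \<tau>b)" using lower_ok_Cons Suc.prems a by simp
  then have IH: "lhs (row_schur n x) \<sigma> \<sigma>b a c M (a # \<tau>) (1 # \<tau>b) = rhs (row_schur n x) \<sigma> \<sigma>b a c M (a # \<tau>) (1 # \<tau>b)"
    by (rule Suc.IH)
  show ?case unfolding lhs_Suc IH last rs by (simp add: algebra_simps)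
qed

lemma overlap_valid_append:
  "overlap_valid A Ab \<Longrightarrow> overlap_valid B Bb \<Longrightarrow> g \<le> last A \<Longrightarrow> g \<le> hd B \<Longrightarrow>
   overlap_valid (A @ B) (Ab @ g # Bb)"
proof (induction A arbitrary: Ab)
  case (Cons p A)
  show ?case
  proof (cases A)
    case Nil
    then show ?thesis using Cons.prems by (cases B) auto
  next
    case (Cons q A')
    then obtain b Ab' where "Ab = b # Ab'" using Cons.prems(1) by (cases Ab) auto
    then show ?thesis using Cons.IH[of Ab'] Cons.prems \<open>A = q # A'\<close> by simp
  qed
qed simp

lemma overlap_valid_mono_hd: "overlap_valid (y # l) lb \<Longrightarrow> y \<le> y' \<Longrightarrow> overlap_valid (y' # l) lb"
  by (cases l; cases lb) auto

lemma overlap_valid_replicate: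
  "1 \<le> a \<Longrightarrow> 1 \<le> y \<Longrightarrow>
   overlap_valid (y # replicate m a @ l) (replicate m 1 @ lb) = overlap_valid ((if m = 0 then y else a) # l) lb"
  by (induction m arbitrary: y) auto

lemma standing_sigma:
  assumes S: "standing_hyp \<sigma> \<tau> \<sigma>b \<tau>b" and W: "1 \<le> hd W" "overlap_valid W Wb"
  shows "overlap_valid (\<sigma> @ W) (\<sigma>b @ Wb)"
proof (cases "\<sigma> = []")
  case True
  then show ?thesis using S W unfolding standing_hyp_def by simp
next
  case False
  have ls: "length \<sigma>b = length \<sigma>" and l1: "last \<sigma>b = 1" and pos: "\<forall>i<length \<sigma>. 1 \<le> \<sigma>!i"
    and ov: "\<forall>i. i + 1 < length \<sigma> \<longrightarrow> \<sigma>b!i \<le> min (\<sigma>!i) (\<sigma>!(i+1))"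
    using S False unfolding standing_hyp_def by auto
  have "overlap_valid \<sigma> (butlast \<sigma>b)"
    unfolding overlap_valid_def using ls ov False by (auto simp: nth_butlast)
  moreover have "1 \<le> last \<sigma>" using pos False by (simp add: last_conv_nth)
  moreover have "\<sigma>b = butlast \<sigma>b @ [1]" using ls l1 False by (metis append_butlast_last_id length_0_conv)
  ultimately show ?thesis using overlap_valid_append[OF _ W(2), of \<sigma> "butlast \<sigma>b" 1] W(1)
    by (metis append.assoc append_Cons append_Nil)
qed

lemma standing_tau:
  assumes S: "standing_hyp \<sigma> \<tau> \<sigma>b \<tau>b" and y: "1 \<le> y"
  shows "overlap_valid (y # \<tau>) \<tau>b"
proof (cases \<tau>)
  case Nil
  then show ?thesis using S unfolding standing_hyp_def by simp
next
  case (Cons t \<tau>')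
  have lt: "length \<tau>b = length \<tau>" and h1: "hd \<tau>b = 1" and pos: "\<forall>i<length \<tau>. 1 \<le> \<tau>!i"
    and ov: "\<forall>i. 1 \<le> i \<and> i < length \<tau> \<longrightarrow> \<tau>b!i \<le> min (\<tau>!i) (\<tau>!(i-1))"
    using S Cons unfolding standing_hyp_def by auto
  obtain \<tau>b' where tb: "\<tau>b = 1 # \<tau>b'" using lt h1 Cons by (cases \<tau>b) auto
  have "overlap_valid \<tau> \<tau>b'"
    unfolding overlap_valid_def
  proof (rule conjI)
    show "length \<tau>b' + 1 = length \<tau>" using lt tb by simp
    show "\<forall>i<length \<tau>b'. \<tau>b'!i \<le> \<tau>!i \<and> \<tau>b'!i \<le> \<tau>!Suc i"
    proof (intro allI impI)
      fix i assume "i < length \<tau>b'"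
      then show "\<tau>b'!i \<le> \<tau>!i \<and> \<tau>b'!i \<le> \<tau>!Suc i" using ov[rule_format, of "Suc i"] lt tb by simp
    qed
  qed
  then show ?thesis using y pos Cons tb by auto
qed

lemma valid_core:
  assumes S: "standing_hyp \<sigma> \<tau> \<sigma>b \<tau>b" and a: "1 \<le> a" and "r \<le> p" "r \<le> q" "1 \<le> q"
  shows "overlap_valid (p # q # replicate m a @ \<tau>) (r # replicate m 1 @ \<tau>b)"
proof -
  have "overlap_valid ((if m = 0 then q else a) # \<tau>) \<tau>b" by (rule standing_tau[OF S]) (use a assms in auto)
  then show ?thesis using overlap_valid_replicate[OF a \<open>1 \<le> q\<close>] assms by simp
qed

lemma valid_two_rows:
  assumes S: "standing_hyp \<sigma> \<tau> \<sigma>b \<tau>b" and a: "1 \<le> a" and "r \<le> p" "r \<le> q" "1 \<le> p" "1 \<le> q"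
  shows "overlap_valid (\<sigma> @ [p, q] @ replicate m a @ \<tau>) (\<sigma>b @ [r] @ replicate m 1 @ \<tau>b)"
  using standing_sigma[OF S _ valid_core[OF S a assms(3,4,6)]] assms by simp

lemma valid_shifted_two_rows:
  assumes S: "standing_hyp \<sigma> \<tau> \<sigma>b \<tau>b" and a: "1 \<le> a" and "r \<le> p" "r \<le> q" "1 \<le> p" "1 \<le> q"
    and i: "1 \<le> i"
  shows "overlap_valid (\<sigma> @ [a+1] @ replicate (i-1) a @ [p, q] @ replicate m a @ \<tau>)
    (\<sigma>b @ replicate i 1 @ [r] @ replicate m 1 @ \<tau>b)"
proof -
  obtain j where j: "i = Suc j" using i by (cases i) auto
  have "overlap_valid ((if j = 0 then a+1 else a) # p # q # replicate m a @ \<tau>) (1 # r # replicate m 1 @ \<tau>b)"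
    using valid_core[OF S a assms(3,4,6)] assms by simp
  then have "overlap_valid ((a+1) # replicate j a @ p # q # replicate m a @ \<tau>) (replicate j 1 @ 1 # r # replicate m 1 @ \<tau>b)"
    using overlap_valid_replicate[of a "a+1" j] a by simp
  from standing_sigma[OF S _ this] show ?thesis unfolding j by (simp add: replicate_app_Cons_same)
qed

lemma valid_tail_shape:
  assumes S: "standing_hyp \<sigma> \<tau> \<sigma>b \<tau>b" and a: "1 \<le> a" and t: "\<tau> \<noteq> []" and K: "1 \<le> K" and M: "1 \<le> M"
  shows "overlap_valid (\<sigma> @ [a+1] @ replicate (M-1) a @ [K, K-1 + hd \<tau>] @ tl \<tau>)
    (\<sigma>b @ replicate M 1 @ [K] @ tl \<tau>b)"
proof -
  obtain m where m: "M = Suc m" using M by (cases M) auto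
  obtain t1 \<tau>' where tt: "\<tau> = t1 # \<tau>'" using t by (cases \<tau>) auto
  have "length \<tau>b = length \<tau>" "hd \<tau>b = 1" using S t unfolding standing_hyp_def by auto
  then obtain \<tau>b' where tb: "\<tau>b = 1 # \<tau>b'" using tt by (cases \<tau>b) auto
  have "overlap_valid (1 # \<tau>) \<tau>b" by (rule standing_tau[OF S]) simp
  then have v0: "overlap_valid (t1 # \<tau>') \<tau>b'" and t1: "1 \<le> t1" using tt tb by auto
  define y where "y = K - 1 + t1"
  have "overlap_valid (y # \<tau>') \<tau>b'" by (rule overlap_valid_mono_hd[OF v0]) (use K in \<open>simp add: y_def\<close>)
  moreover have "K \<le> y" using t1 unfolding y_def by simp
  ultimately have "overlap_valid ((if m = 0 then a+1 else a) # K # y # \<tau>') (1 # K # \<tau>b')"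
    using K a by simp
  then have "overlap_valid ((a+1) # replicate m a @ K # y # \<tau>') (replicate m 1 @ 1 # K # \<tau>b')"
    using overlap_valid_replicate[of a "a+1" m] a by simp
  from standing_sigma[OF S _ this] show ?thesis unfolding m tt tb y_def by (simp add: replicate_app_Cons_same)
qed

lemma valid_cong_shapes:
  assumes S: "standing_hyp \<sigma> \<tau> \<sigma>b \<tau>b" and a: "1 \<le> a"
    and agree: "\<And>\<alpha> \<beta>. overlap_valid \<alpha> \<beta> \<Longrightarrow> F \<alpha> \<beta> = F' \<alpha> \<beta>"
    and pq: "r \<le> p" "r \<le> q" "1 \<le> p" "1 \<le> q"
  shows "F (\<sigma> @ [p, q] @ replicate m a @ \<tau>) (\<sigma>b @ [r] @ replicate m 1 @ \<tau>b)
      = F' (\<sigma> @ [p, q] @ replicate m a @ \<tau>) (\<sigma>b @ [r] @ replicate m 1 @ \<tau>b)"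
    "1 \<le> i \<Longrightarrow> F (\<sigma> @ [a+1] @ replicate (i-1) a @ [p, q] @ replicate m a @ \<tau>)
        (\<sigma>b @ replicate i 1 @ [r] @ replicate m 1 @ \<tau>b)
      = F' (\<sigma> @ [a+1] @ replicate (i-1) a @ [p, q] @ replicate m a @ \<tau>)
        (\<sigma>b @ replicate i 1 @ [r] @ replicate m 1 @ \<tau>b)"
  using agree valid_two_rows[OF S a pq] valid_shifted_two_rows[OF S a pq] by blast+

lemma lhs_valid_cong:
  assumes S: "standing_hyp \<sigma> \<tau> \<sigma>b \<tau>b" and a: "2 \<le> a"
    and agree: "\<And>\<alpha> \<beta>. overlap_valid \<alpha> \<beta> \<Longrightarrow> F \<alpha> \<beta> = F' \<alpha> \<beta>"
  shows "lhs F \<sigma> \<sigma>b a c M \<tau> \<tau>b = lhs F' \<sigma> \<sigma>b a c M \<tau> \<tau>b"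
proof -
  have a1: "1 \<le> a" using a by simp
  note cong = valid_cong_shapes[where F=F and F'=F', OF S a1 agree]
  have "lhs_summand F \<sigma> \<sigma>b a c M \<tau> \<tau>b i = lhs_summand F' \<sigma> \<sigma>b a c M \<tau> \<tau>b i" if "i \<in> {1..M}" for i
    unfolding lhs_summand_def
    using that a cong(2)[where r="c+1" and p="a+c-1" and q="a+c" and i=i and m="M-i"]
      cong(2)[where r="c+1" and p="a+c" and q="a+c-1" and i=i and m="M-i"] by simp
  then show ?thesis unfolding lhs_def
    using a cong(1)[where r="c+1" and p="a+c" and q="a+c" and m=M]
      cong(1)[where r="c+1" and p="a+c+1" and q="a+c-1" and m=M] by simp
qed

lemma rhs_valid_cong:
  assumes S: "standing_hyp \<sigma> \<tau> \<sigma>b \<tau>b" and a: "2 \<le> a" and M: "1 \<le> M"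
    and agree: "\<And>\<alpha> \<beta>. overlap_valid \<alpha> \<beta> \<Longrightarrow> F \<alpha> \<beta> = F' \<alpha> \<beta>"
  shows "rhs F \<sigma> \<sigma>b a c M \<tau> \<tau>b = rhs F' \<sigma> \<sigma>b a c M \<tau> \<tau>b"
proof -
  have a1: "1 \<le> a" using a by simp
  note cong = valid_cong_shapes[where F=F and F'=F', OF S a1 agree]
  have "rhs_summand F \<sigma> \<sigma>b a c M \<tau> \<tau>b i = rhs_summand F' \<sigma> \<sigma>b a c M \<tau> \<tau>b i" if "i \<in> {1..M-1}" for i
  proof -
    have "M - i - 1 = M - 1 - i" by simp
    then show ?thesis unfolding rhs_summand_def
      using that a cong(2)[where r="a+c" and p="a+c" and q="a+a+c-1" and i=i and m="M-1-i"]
      cong(2)[where r="a+c" and p="a+a+c-1" and q="a+c" and i=i and m="M-1-i"] by simp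
  qed
  moreover have "tail_term F \<sigma> \<sigma>b a c M \<tau> \<tau>b = tail_term F' \<sigma> \<sigma>b a c M \<tau> \<tau>b"
    unfolding tail_term_def using agree valid_tail_shape[OF S _ _ _ M] a by simp
  ultimately show ?thesis unfolding rhs_def
    using a cong(1)[where r="a+c" and p="a+c" and q="a+c" and m=M]
      cong(1)[where r="a+c" and p="a+c+1" and q="a+a+c-1" and m="M-1"]
      cong(1)[where r="a+c" and p="a+a+c" and q="a+c" and m="M-1"] by simp
qed

lemma standing_hyp_upper_lower:
  assumes "standing_hyp \<sigma> \<tau> \<sigma>b \<tau>b"
  shows "upper_ok \<sigma> \<sigma>b" "lower_ok \<tau> \<tau>b"
  using assms unfolding standing_hyp_def upper_ok_def lower_ok_def
  by (auto simp: hd_conv_nth)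

theorem lemma2p11:
  fixes \<sigma> \<tau> \<sigma>b \<tau>b :: "nat list" and M a k n :: nat and x :: "nat \<Rightarrow> 'a::comm_ring_1"
  assumes "standing_hyp \<sigma> \<tau> \<sigma>b \<tau>b" and "M \<ge> 1" and "a \<ge> 2" and "k \<ge> 1"
  shows "ov_schur n x (\<sigma> @ [k*a, k*a] @ replicate M a @ \<tau>) (\<sigma>b @ [(k-1)*a+1] @ replicate M 1 @ \<tau>b)
       - ov_schur n x (\<sigma> @ [k*a+1, k*a-1] @ replicate M a @ \<tau>) (\<sigma>b @ [(k-1)*a+1] @ replicate M 1 @ \<tau>b)
       + (\<Sum>i=1..M.
            ov_schur n x (\<sigma> @ [a+1] @ replicate (i-1) a @ [k*a-1, k*a] @ replicate (M-i) a @ \<tau>)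
                         (\<sigma>b @ replicate i 1 @ [(k-1)*a+1] @ replicate (M-i) 1 @ \<tau>b)
          - ov_schur n x (\<sigma> @ [a+1] @ replicate (i-1) a @ [k*a, k*a-1] @ replicate (M-i) a @ \<tau>)
                         (\<sigma>b @ replicate i 1 @ [(k-1)*a+1] @ replicate (M-i) 1 @ \<tau>b))
     = ov_schur n x (\<sigma> @ [k*a, k*a] @ replicate M a @ \<tau>) (\<sigma>b @ [k*a] @ replicate M 1 @ \<tau>b)
       + ov_schur n x (\<sigma> @ [k*a+1, (k+1)*a-1] @ replicate (M-1) a @ \<tau>) (\<sigma>b @ [k*a] @ replicate (M-1) 1 @ \<tau>b)
       - ov_schur n x (\<sigma> @ [(k+1)*a, k*a] @ replicate (M-1) a @ \<tau>) (\<sigma>b @ [k*a] @ replicate (M-1) 1 @ \<tau>b)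
       + (if \<tau> = [] then 0 else
            ov_schur n x (\<sigma> @ [a+1] @ replicate (M-1) a @ [k*a, k*a-1 + hd \<tau>] @ tl \<tau>)
                         (\<sigma>b @ replicate M 1 @ [k*a] @ tl \<tau>b))
       + (\<Sum>i=1..M-1.
            ov_schur n x (\<sigma> @ [a+1] @ replicate (i-1) a @ [k*a, (k+1)*a-1] @ replicate (M-1-i) a @ \<tau>)
                         (\<sigma>b @ replicate i 1 @ [k*a] @ replicate (M-i-1) 1 @ \<tau>b)
          - ov_schur n x (\<sigma> @ [a+1] @ replicate (i-1) a @ [(k+1)*a-1, k*a] @ replicate (M-1-i) a @ \<tau>)
                         (\<sigma>b @ replicate i 1 @ [k*a] @ replicate (M-i-1) 1 @ \<tau>b))"
proof -
  note S = assms(1) and M = assms(2) and a = assms(3)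
  define c where "c = (k-1)*a"
  have ek: "k*a = a + c" "(k-1)*a = c" "(k+1)*a = a + a + c"
    using assms(4) unfolding c_def by (cases k; simp)+
  have "lhs (ov_schur n x) \<sigma> \<sigma>b a c M \<tau> \<tau>b = lhs (row_schur n x) \<sigma> \<sigma>b a c M \<tau> \<tau>b"
    by (rule lhs_valid_cong[OF S a ov_schur_row_schur])
  also have "\<dots> = rhs (row_schur n x) \<sigma> \<sigma>b a c M \<tau> \<tau>b"
    using row_schur_identity[OF standing_hyp_upper_lower(1)[OF S] a M standing_hyp_upper_lower(2)[OF S]] .
  also have "\<dots> = rhs (ov_schur n x) \<sigma> \<sigma>b a c M \<tau> \<tau>b"
    by (rule rhs_valid_cong[OF S a M ov_schur_row_schur[symmetric]])
  finally show ?thesis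
    unfolding ek lhs_def rhs_def lhs_summand_def rhs_summand_def tail_term_def .
qed

end
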